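(* Let $l\ge1$, $n\ge1$, $\mu>0$, $1\le p<\infty$, $0<q\le\infty$, and let $H$ be a traceless Hermitian observable on $n$ qubits. Let $\mathcal C_{\hat\mu_{p,q}\le\mu}$ be the set of depth-$l$ circuits $\vec C_l=(\Phi_l,\dots,\Phi_1)$ of unital quantum channels on $n$ qubits with $\hat\mu_{p,q}(\vec C_l)\le\mu$, and $N=4^n-1$. Then for every sample $S=(\vec x_1,\dots,\vec x_m)$: (1) if $1\le p\le2$, $R_S(\mathcal F\circ\mathcal C_{\hat\mu_{p,q}\le\mu})\le\mu N^{l\max\{1/p^*,1/q\}}\frac{\sqrt{\min\{p^*,8n\}}}{\sqrt m}\hat K_p(S,H)$; (2) if $2<p<\infty$, $R_S(\mathcal F\circ\mathcal C_{\hat\mu_{p,q}\le\mu})\le\mu N^{l\max\{1/p^*,1/q\}}\frac{\sqrt{p^*}}{m^{1/p}}\hat K_p(S,H)$.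
   Context: Pauli notation $P_{\vec z}$ as tensor products of $P_0=\mathbb I,P_1=X,P_2=Y,P_3=Z$; $\vec0$ the all-zero string. Representation matrix: $M^\Phi_{\vec z\vec x}=2^{-n}\mathrm{Tr}(P_{\vec z}\Phi(P_{\vec x}))$; for unital $\Phi$ ($\Phi(\mathbb I)=\mathbb I$), $\hat M^\Phi$ is the submatrix with rows and columns indexed by strings $\ne\vec0$. Group norm: $\|M\|_{p,q}=(\frac1{N_1}\sum_i\|M_i\|_p^q)^{1/q}$ for an $N_1\times N_2$ matrix with rows $M_i$ ($\max_i\|M_i\|_p$ if $q=\infty$). $p^*$ is the Hölder conjugate. $\hat\mu_{p,q}(\vec C_l)=\prod_{i=1}^l\|\hat M^{\Phi_i}\|_{p,q}$. $C_l=\Phi_l\circ\cdots\circ\Phi_1$, $f_{\vec C_l}(\vec x)=\mathrm{Tr}(C_l(\rho(\vec x))H)$ with $\rho(\vec x)$ an $n$-qubit pure state encoding $\vec x$; $R_S(\mathcal G)=\mathbb E_{\vec\epsilon}\frac1m\sup_{g\in\mathcal G}|\sum_i\epsilon_ig(\vec x_i)|$ with i.i.d. uniform signs. $\hat{\vec\alpha}\in\mathbb R^N$ has entries $\mathrm{Tr}(P_{\vec z}H)$, $\hat{\vec f}_I(\vec x)\in\mathbb R^N$ has entries $2^{-n}\mathrm{Tr}(P_{\vec z}\rho(\vec x))$ (indices $\vec z\ne\vec0$), $\hat K_p(S,H)=\|\hat{\vec\alpha}\|_p\max_i\|\hat{\vec f}_I(\vec x_i)\|_{p^*}$. *)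

theory Defs
  imports "Jordan_Normal_Form.Matrix" "HOL-Library.Extended_Real"
begin

definition mtrace :: "complex mat \<Rightarrow> complex" where
  "mtrace A = (\<Sum>i<dim_row A. A $$ (i, i))"

definition hermitian :: "nat \<Rightarrow> complex mat \<Rightarrow> bool" where
  "hermitian d A \<longleftrightarrow> A \<in> carrier_mat d d \<and>
     (\<forall>i<d. \<forall>j<d. A $$ (i, j) = cnj (A $$ (j, i)))"

definition psd :: "nat \<Rightarrow> complex mat \<Rightarrow> bool" where
  "psd d A \<longleftrightarrow> hermitian d A \<and>
     (\<forall>v :: nat \<Rightarrow> complex. 0 \<le> Re (\<Sum>i<d. \<Sum>j<d. cnj (v i) * A $$ (i, j) * v j))"

text \<open>Block (a,b) of size d x d of a (k d) x (k d) matrix, and the action of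
  Phi tensor id_k on such a block matrix.\<close>
definition block :: "nat \<Rightarrow> complex mat \<Rightarrow> nat \<Rightarrow> nat \<Rightarrow> complex mat" where
  "block d X a b = mat d d (\<lambda>(r, s). X $$ (a * d + r, b * d + s))"

definition ampl :: "nat \<Rightarrow> nat \<Rightarrow> (complex mat \<Rightarrow> complex mat) \<Rightarrow> complex mat \<Rightarrow> complex mat" where
  "ampl d k \<Phi> X = mat (k * d) (k * d)
      (\<lambda>(i, j). \<Phi> (block d X (i div d) (j div d)) $$ (i mod d, j mod d))"

definition quantum_channel :: "nat \<Rightarrow> (complex mat \<Rightarrow> complex mat) \<Rightarrow> bool" where
  "quantum_channel n \<Phi> \<longleftrightarrow>
     (let d = 2 ^ n in
      (\<forall>A \<in> carrier_mat d d. \<Phi> A \<in> carrier_mat d d) \<and>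
      (\<forall>A \<in> carrier_mat d d. \<forall>B \<in> carrier_mat d d. \<Phi> (A + B) = \<Phi> A + \<Phi> B) \<and>
      (\<forall>A \<in> carrier_mat d d. \<forall>c. \<Phi> (c \<cdot>\<^sub>m A) = c \<cdot>\<^sub>m \<Phi> A) \<and>
      (\<forall>A \<in> carrier_mat d d. mtrace (\<Phi> A) = mtrace A) \<and>
      (\<forall>k>0. \<forall>X. psd (k * d) X \<longrightarrow> psd (k * d) (ampl d k \<Phi> X)))"

definition unital_channel :: "nat \<Rightarrow> (complex mat \<Rightarrow> complex mat) \<Rightarrow> bool" where
  "unital_channel n \<Phi> \<longleftrightarrow> quantum_channel n \<Phi> \<and> \<Phi> (1\<^sub>m (2 ^ n)) = 1\<^sub>m (2 ^ n)"

text \<open>Single-qubit Paulis P0 = I, P1 = X, P2 = Y, P3 = Z as entry functions.\<close>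
definition sigma :: "nat \<Rightarrow> nat \<Rightarrow> nat \<Rightarrow> complex" where
  "sigma a r s =
     (if a = 0 then (if r = s then 1 else 0)
      else if a = 1 then (if r \<noteq> s then 1 else 0)
      else if a = 2 then (if r = 0 \<and> s = 1 then - \<i> else if r = 1 \<and> s = 0 then \<i> else 0)
      else (if r = s then (if r = 0 then 1 else -1) else 0))"

text \<open>Pauli string z (list of length n, entries in 0..3): tensor product of the
  sigma (z!k), qubit k corresponding to bit k of the basis index.\<close>
definition pauli :: "nat \<Rightarrow> nat list \<Rightarrow> complex mat" where
  "pauli n z = mat (2 ^ n) (2 ^ n)
     (\<lambda>(i, j). \<Prod>k<n. sigma (z ! k) (i div 2 ^ k mod 2) (j div 2 ^ k mod 2))"

definition pstrings :: "nat \<Rightarrow> nat list set" where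
  "pstrings n = {z. length z = n \<and> set z \<subseteq> {0..<4}}"

text \<open>Non-zero Pauli strings (index set of hat M, of size N = 4^n - 1).\<close>
definition nzstrings :: "nat \<Rightarrow> nat list set" where
  "nzstrings n = pstrings n - {replicate n 0}"

definition repM :: "nat \<Rightarrow> (complex mat \<Rightarrow> complex mat) \<Rightarrow> nat list \<Rightarrow> nat list \<Rightarrow> complex" where
  "repM n \<Phi> z x = mtrace (pauli n z * \<Phi> (pauli n x)) / 2 ^ n"

definition lpnorm :: "real \<Rightarrow> 'i set \<Rightarrow> ('i \<Rightarrow> complex) \<Rightarrow> real" where
  "lpnorm p I v = (\<Sum>i\<in>I. cmod (v i) powr p) powr (1 / p)"

definition lpnorm_e :: "ereal \<Rightarrow> 'i set \<Rightarrow> ('i \<Rightarrow> complex) \<Rightarrow> real" where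
  "lpnorm_e p I v = (if p = \<infinity> then Max ((\<lambda>i. cmod (v i)) ` I) else lpnorm (real_of_ereal p) I v)"

definition pstar :: "real \<Rightarrow> ereal" where
  "pstar p = (if p = 1 then \<infinity> else ereal (p / (p - 1)))"

definition recip_e :: "ereal \<Rightarrow> real" where
  "recip_e q = (if q = \<infinity> then 0 else 1 / real_of_ereal q)"

definition group_norm :: "nat \<Rightarrow> real \<Rightarrow> ereal \<Rightarrow> (nat list \<Rightarrow> nat list \<Rightarrow> complex) \<Rightarrow> real" where
  "group_norm n p q M =
     (let rows = nzstrings n; rn = (\<lambda>z. lpnorm p (nzstrings n) (M z)) in
      if q = \<infinity> then Max (rn ` rows)
      else ((\<Sum>z\<in>rows. rn z powr real_of_ereal q) / real (card rows)) powr (1 / real_of_ereal q))"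

definition mu_hat :: "nat \<Rightarrow> real \<Rightarrow> ereal \<Rightarrow> (complex mat \<Rightarrow> complex mat) list \<Rightarrow> real" where
  "mu_hat n p q cs = prod_list (map (\<lambda>\<Phi>. group_norm n p q (repM n \<Phi>)) cs)"

text \<open>C_l = Phi_l o ... o Phi_1 for cs = [Phi_1, ..., Phi_l] (Phi_1 applied first).\<close>
definition apply_circuit :: "(complex mat \<Rightarrow> complex mat) list \<Rightarrow> complex mat \<Rightarrow> complex mat" where
  "apply_circuit cs X = fold (\<lambda>\<Phi> Y. \<Phi> Y) cs X"

definition circuits :: "nat \<Rightarrow> nat \<Rightarrow> real \<Rightarrow> ereal \<Rightarrow> real \<Rightarrow> (complex mat \<Rightarrow> complex mat) list set" where
  "circuits n l p q \<mu> = {cs. length cs = l \<and> (\<forall>\<Phi>\<in>set cs. unital_channel n \<Phi>) \<and> mu_hat n p q cs \<le> \<mu>}"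

text \<open>f_{C}(x) = Tr(C_l(rho(x)) H) (a real number; we take the real part).\<close>
definition f_circ :: "('x \<Rightarrow> complex mat) \<Rightarrow> complex mat \<Rightarrow> (complex mat \<Rightarrow> complex mat) list \<Rightarrow> 'x \<Rightarrow> real" where
  "f_circ \<rho> H cs x = Re (mtrace (apply_circuit cs (\<rho> x) * H))"

definition fclass :: "nat \<Rightarrow> nat \<Rightarrow> real \<Rightarrow> ereal \<Rightarrow> real \<Rightarrow> ('x \<Rightarrow> complex mat) \<Rightarrow> complex mat \<Rightarrow> ('x \<Rightarrow> real) set" where
  "fclass n l p q \<mu> \<rho> H = f_circ \<rho> H ` circuits n l p q \<mu>"

definition signs :: "nat \<Rightarrow> real list set" where
  "signs m = {e. length e = m \<and> set e \<subseteq> {-1, 1}}"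

definition rademacher :: "'x list \<Rightarrow> ('x \<Rightarrow> real) set \<Rightarrow> real" where
  "rademacher xs G =
     (let m = length xs in
      (\<Sum>e\<in>signs m. (1 / real m) *
          Sup {\<bar>\<Sum>i<m. e ! i * g (xs ! i)\<bar> | g. g \<in> G}) / 2 ^ m)"

definition pure_state :: "nat \<Rightarrow> complex mat \<Rightarrow> bool" where
  "pure_state n R \<longleftrightarrow> (\<exists>v :: nat \<Rightarrow> complex. (\<Sum>i<2 ^ n. (cmod (v i))\<^sup>2) = 1 \<and>
       R = mat (2 ^ n) (2 ^ n) (\<lambda>(i, j). v i * cnj (v j)))"

definition fI_hat :: "nat \<Rightarrow> complex mat \<Rightarrow> nat list \<Rightarrow> complex" where
  "fI_hat n R z = mtrace (pauli n z * R) / 2 ^ n"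

definition K_hat :: "nat \<Rightarrow> real \<Rightarrow> ('x \<Rightarrow> complex mat) \<Rightarrow> 'x list \<Rightarrow> complex mat \<Rightarrow> real" where
  "K_hat n p \<rho> xs H =
     lpnorm p (nzstrings n) (\<lambda>z. mtrace (pauli n z * H)) *
     Max {lpnorm_e (pstar p) (nzstrings n) (fI_hat n (\<rho> (xs ! i))) | i. i < length xs}"

end

theory Submission
  imports Defs "HOL-Probability.Hoeffding"
begin

(*
  For a unital channel the identity component of a state does not feed into the others, so a
  circuit acts on the vector of non-identity Pauli coefficients by the product of the matrices
  hat M of its layers, and, H being traceless, f_C(x) is the pairing of the coefficient vector
  alpha of H with that product applied to the coefficient vector of rho(x).  By Hoelder, the
  empirical Rademacher complexity is at most ||alpha||_p times the average p*-norm of the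
  product applied to the signed sum of the sample coefficient vectors.  Each layer costs at most
  N^max(1/p*,1/q) ||hat M||_{p,q} in the p*-norm: Hoelder in every row, then a comparison of the
  l_p* and l_q norms of the vector of row norms.  What is left is the average p*-norm of a
  Rademacher sum of m vectors.  For p* >= 2 Khintchine's inequality, proved coordinatewise from
  the moment generating function, gives sqrt(p* m); for p* > 8n one first passes to the
  l_(4n) norm, which costs only N^(1/(4n)) <= sqrt 2.  For p* <= 2 the second moment and
  concavity give m to the power 1/p*.
*)

section \<open>Finite-dimensional lp norms\<close>

definition lnorm :: "real \<Rightarrow> 'i set \<Rightarrow> ('i \<Rightarrow> real) \<Rightarrow> real" where
  "lnorm r S a = (\<Sum>i\<in>S. a i powr r) powr (1/r)"

lemma lnorm_nonneg: "lnorm r S a \<ge> 0"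
  by (simp add: lnorm_def)

lemma lnorm_powr:
  assumes "r > 0" "\<forall>i\<in>S. a i \<ge> 0"
  shows "lnorm r S a powr r = (\<Sum>i\<in>S. a i powr r)"
  unfolding lnorm_def using assms by (simp add: powr_powr sum_nonneg)

lemma lnorm_eq_0D:
  assumes "finite S" "lnorm r S a = 0" "i \<in> S"
  shows "a i = 0"
proof -
  have "(\<Sum>i\<in>S. a i powr r) = 0" using assms(2) unfolding lnorm_def by simp
  hence "\<forall>i\<in>S. a i powr r = 0" using assms(1) by (subst (asm) sum_nonneg_eq_0_iff) auto
  thus ?thesis using assms(3) by simp
qed

lemma Holder_lnorm:
  assumes "finite S" "\<forall>i\<in>S. a i \<ge> 0" "\<forall>i\<in>S. b i \<ge> 0" "p > 1" "q > 1" "1/p + 1/q = 1"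
  shows "(\<Sum>i\<in>S. a i * b i) \<le> lnorm p S a * lnorm q S b"
proof (cases "lnorm p S a = 0 \<or> lnorm q S b = 0")
  case True
  then have "\<forall>i\<in>S. a i * b i = 0"
    using lnorm_eq_0D[of S p a] lnorm_eq_0D[of S q b] assms by auto
  then have "(\<Sum>i\<in>S. a i * b i) = 0" by (intro sum.neutral) auto
  then show ?thesis by (simp add: lnorm_nonneg)
next
  case False
  define A where "A = lnorm p S a"
  define B where "B = lnorm q S b"
  have A: "A > 0" and B: "B > 0"
    using False lnorm_nonneg unfolding A_def B_def by (metis less_eq_real_def)+
  have "(\<Sum>i\<in>S. (a i / A) * (b i / B)) \<le> (\<Sum>i\<in>S. (a i / A) powr p / p + (b i / B) powr q / q)"
    by (rule sum_mono, rule Youngs_inequality) (use assms A B in auto)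
  also have "\<dots> = (\<Sum>i\<in>S. a i powr p) / A powr p / p + (\<Sum>i\<in>S. b i powr q) / B powr q / q"
    using assms A B by (simp add: powr_divide sum.distrib sum_divide_distrib)
  also have "\<dots> = 1/p + 1/q"
    using A B assms powr_gt_zero[of A p] powr_gt_zero[of B q] lnorm_powr[of p S a] lnorm_powr[of q S b]
    unfolding A_def B_def by simp
  finally have "(\<Sum>i\<in>S. a i * b i) / (A * B) \<le> 1"
    using assms(6) by (simp add: sum_divide_distrib)
  then show ?thesis using A B unfolding A_def B_def by (simp add: divide_le_eq)
qed

lemma sum_le_card_powr_lnorm:
  assumes "finite S" "\<forall>i\<in>S. a i \<ge> 0" "s \<ge> 1"
  shows "(\<Sum>i\<in>S. a i) \<le> real (card S) powr (1 - 1/s) * lnorm s S a"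
proof (cases "s = 1")
  case True
  then show ?thesis using assms by (cases "card S = 0") (auto simp: lnorm_def sum_nonneg)
next
  case False
  define q where "q = s / (s - 1)"
  have s: "s > 1" using False assms by simp
  have q: "q > 1" "1/s + 1/q = 1" using s unfolding q_def by (auto simp: field_simps)
  have "(\<Sum>i\<in>S. a i) = (\<Sum>i\<in>S. a i * 1)" by simp
  also have "\<dots> \<le> lnorm s S a * lnorm q S (\<lambda>_. 1)"
    by (rule Holder_lnorm) (use assms s q in auto)
  also have "lnorm q S (\<lambda>_. 1) = real (card S) powr (1 - 1/s)"
    using q s unfolding q_def lnorm_def by (simp add: field_simps)
  finally show ?thesis by (simp add: mult.commute)
qed

lemma sum_le_card_powr_bound:
  assumes "finite A" "r \<ge> 1" "\<forall>e\<in>A. Y e \<ge> 0" "(\<Sum>e\<in>A. Y e powr r) \<le> T"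
  shows "(\<Sum>e\<in>A. Y e) \<le> real (card A) powr (1 - 1/r) * T powr (1/r)"
proof -
  have "(\<Sum>e\<in>A. Y e) \<le> real (card A) powr (1 - 1/r) * lnorm r A Y"
    by (rule sum_le_card_powr_lnorm) (use assms in auto)
  also have "lnorm r A Y \<le> T powr (1/r)"
    unfolding lnorm_def using assms by (intro powr_mono2) (auto intro: sum_nonneg)
  finally show ?thesis by (simp add: mult_left_mono)
qed

lemma le_lnorm:
  assumes "finite S" "i \<in> S" "\<forall>i\<in>S. a i \<ge> 0" "r > 0"
  shows "a i \<le> lnorm r S a"
proof -
  have "a i powr r \<le> (\<Sum>i\<in>S. a i powr r)"
    using assms by (intro member_le_sum) auto
  hence "(a i powr r) powr (1/r) \<le> (\<Sum>i\<in>S. a i powr r) powr (1/r)"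
    using assms by (intro powr_mono2) auto
  thus ?thesis using assms by (simp add: powr_powr lnorm_def)
qed

lemma lnorm_mono:
  assumes "r > 0" "\<forall>i\<in>S. 0 \<le> a i \<and> a i \<le> b i"
  shows "lnorm r S a \<le> lnorm r S b"
  unfolding lnorm_def using assms by (intro powr_mono2 sum_mono) (auto intro: sum_nonneg)

lemma lnorm_mult_const:
  assumes "r > 0" "c \<ge> 0" "\<forall>i\<in>S. a i \<ge> 0"
  shows "lnorm r S (\<lambda>i. a i * c) = lnorm r S a * c"
proof -
  have "(\<Sum>i\<in>S. (a i * c) powr r) = (\<Sum>i\<in>S. a i powr r) * c powr r"
    using assms by (simp add: powr_mult sum_distrib_right)
  thus ?thesis unfolding lnorm_def using assms by (simp add: powr_mult powr_powr sum_nonneg)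
qed

lemma lnorm_le_card_powr:
  assumes "r > 0" "\<forall>i\<in>S. 0 \<le> a i \<and> a i \<le> B"
  shows "lnorm r S a \<le> real (card S) powr (1/r) * B"
proof -
  have "lnorm r S a \<le> lnorm r S (\<lambda>_. B)" by (rule lnorm_mono) (use assms in auto)
  also have "\<dots> = real (card S) powr (1/r) * B"
    using assms by (cases "S = {}") (auto simp: lnorm_def powr_mult powr_powr)
  finally show ?thesis .
qed

lemma lnorm_le_card_powr_lnorm:
  assumes "finite S" "0 < r" "r \<le> q" "\<forall>i\<in>S. a i \<ge> 0"
  shows "lnorm r S a \<le> real (card S) powr (1/r - 1/q) * lnorm q S a"
proof -
  have "(\<Sum>i\<in>S. a i powr r) \<le> real (card S) powr (1 - 1/(q/r)) * lnorm (q/r) S (\<lambda>i. a i powr r)"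
    by (rule sum_le_card_powr_lnorm) (use assms in auto)
  also have "lnorm (q/r) S (\<lambda>i. a i powr r) = lnorm q S a powr r"
    using assms unfolding lnorm_def by (simp add: powr_powr)
  finally have "(\<Sum>i\<in>S. a i powr r) \<le> real (card S) powr (1 - r/q) * lnorm q S a powr r" by simp
  hence "(\<Sum>i\<in>S. a i powr r) powr (1/r) \<le> (real (card S) powr (1 - r/q) * lnorm q S a powr r) powr (1/r)"
    using assms by (intro powr_mono2) (auto intro: sum_nonneg)
  also have "\<dots> = real (card S) powr ((1 - r/q) * (1/r)) * lnorm q S a"
    using assms by (simp add: powr_mult powr_powr lnorm_nonneg)
  also have "(1 - r/q) * (1/r) = 1/r - 1/q" using assms by (simp add: field_simps)
  finally show ?thesis unfolding lnorm_def .
qed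

lemma lnorm_antimono_exponent:
  assumes "finite S" "\<forall>i\<in>S. a i \<ge> 0" "0 < q" "q \<le> r"
  shows "lnorm r S a \<le> lnorm q S a"
proof -
  define Q where "Q = lnorm q S a"
  have Q: "Q \<ge> 0" using lnorm_nonneg Q_def by simp
  have "a i powr r \<le> a i powr q * Q powr (r - q)" if i: "i \<in> S" for i
  proof (cases "a i = 0")
    case False
    hence ai: "a i > 0" using assms(2) i by force
    have "a i powr r = a i powr q * a i powr (r - q)" using ai by (simp flip: powr_add)
    also have "\<dots> \<le> a i powr q * Q powr (r - q)"
      using le_lnorm[OF assms(1) i assms(2,3)] ai assms unfolding Q_def
      by (intro mult_left_mono powr_mono2) auto
    finally show ?thesis .
  qed (use assms in simp)
  hence "(\<Sum>i\<in>S. a i powr r) \<le> (\<Sum>i\<in>S. a i powr q) * Q powr (r - q)"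
    by (simp add: sum_distrib_right sum_mono)
  also have "(\<Sum>i\<in>S. a i powr q) = Q powr q" unfolding Q_def using lnorm_powr[OF assms(3,2)] by simp
  also have "Q powr q * Q powr (r - q) = Q powr r"
    using Q assms by (cases "Q = 0") (simp_all flip: powr_add)
  finally have "(\<Sum>i\<in>S. a i powr r) powr (1/r) \<le> (Q powr r) powr (1/r)"
    using assms by (intro powr_mono2) (auto intro: sum_nonneg)
  thus ?thesis using Q assms unfolding lnorm_def[of r] Q_def by (simp add: powr_powr)
qed

lemma powr_sum_le_sum_powr:
  fixes b :: "'i \<Rightarrow> real"
  assumes "finite S" "\<forall>i\<in>S. b i \<ge> 0" "0 < s" "s \<le> 1"
  shows "(\<Sum>i\<in>S. b i) powr s \<le> (\<Sum>i\<in>S. b i powr s)"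
proof (cases "(\<Sum>i\<in>S. b i) = 0")
  case True
  have "0 \<le> (\<Sum>i\<in>S. b i powr s)" by (rule sum_nonneg) simp
  then show ?thesis using True by simp
next
  case False
  define T where "T = (\<Sum>i\<in>S. b i)"
  have T: "T > 0" using False sum_nonneg assms unfolding T_def by (metis less_eq_real_def)
  have "b i * T powr (s - 1) \<le> b i powr s" if i: "i \<in> S" for i
  proof (cases "b i = 0")
    case False
    hence bi: "b i > 0" using assms(2) i by force
    have "b i \<le> T" unfolding T_def using assms i by (intro member_le_sum) auto
    hence "T powr (s - 1) \<le> b i powr (s - 1)"
      using bi assms by (intro powr_mono2') auto
    hence "b i * T powr (s - 1) \<le> b i * b i powr (s - 1)"
      using bi by (simp add: mult_left_mono)
    also have "\<dots> = b i powr s" using bi by (simp add: powr_mult_base)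
    finally show ?thesis .
  qed simp
  hence "(\<Sum>i\<in>S. b i * T powr (s - 1)) \<le> (\<Sum>i\<in>S. b i powr s)" by (intro sum_mono) auto
  moreover have "(\<Sum>i\<in>S. b i * T powr (s - 1)) = T powr s"
    using T by (simp add: sum_distrib_right[symmetric] T_def[symmetric] powr_mult_base)
  ultimately show ?thesis unfolding T_def by simp
qed

definition enorm :: "ereal \<Rightarrow> 'i set \<Rightarrow> ('i \<Rightarrow> real) \<Rightarrow> real" where
  "enorm r S a = (if r = \<infinity> then Max (a ` S) else lnorm (real_of_ereal r) S a)"

lemma lpnorm_e_eq_enorm: "lpnorm_e r S v = enorm r S (\<lambda>i. cmod (v i))"
  by (simp add: lpnorm_e_def enorm_def lpnorm_def lnorm_def)

lemma real_of_ereal_pos: "0 < r \<Longrightarrow> r \<noteq> \<infinity> \<Longrightarrow> real_of_ereal r > 0"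
  by (cases r) auto

lemma recip_e_nonneg: "0 < q \<Longrightarrow> recip_e q \<ge> 0"
  by (cases q) (auto simp: recip_e_def)

lemma recip_e_antimono: "0 < r \<Longrightarrow> r \<le> s \<Longrightarrow> recip_e s \<le> recip_e r"
  by (cases r; cases s) (auto simp: recip_e_def intro: divide_left_mono)

lemma ereal_le_finiteE:
  assumes "0 < r" "r \<le> s" "s \<noteq> \<infinity>"
  obtains r' s' where "r = ereal r'" "s = ereal s'" "0 < r'" "r' \<le> s'"
  using assms by (cases r; cases s) auto

context
  fixes S :: "'i set" and r :: ereal
  assumes S: "finite S" "S \<noteq> {}" and r: "0 < r"
begin

lemma le_enorm: "\<forall>i\<in>S. a i \<ge> 0 \<Longrightarrow> i \<in> S \<Longrightarrow> a i \<le> enorm r S a"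
  using S r real_of_ereal_pos[OF r] by (auto simp: enorm_def intro: le_lnorm)

lemma enorm_nonneg:
  assumes "\<forall>i\<in>S. a i \<ge> 0"
  shows "enorm r S a \<ge> 0"
proof -
  obtain i where "i \<in> S" using S by blast
  then show ?thesis using assms le_enorm[OF assms] by (meson order_trans)
qed

lemma enorm_mono:
  assumes "\<forall>i\<in>S. 0 \<le> a i \<and> a i \<le> b i"
  shows "enorm r S a \<le> enorm r S b"
proof (cases "r = \<infinity>")
  case True
  have "Max (a ` S) \<le> Max (b ` S)"
    using S assms by (auto simp: Max_le_iff intro: order_trans[OF _ Max_ge])
  then show ?thesis using True by (simp add: enorm_def)
qed (use real_of_ereal_pos[OF r] assms in \<open>simp add: enorm_def lnorm_mono\<close>)

lemma enorm_mult_const: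
  assumes "c \<ge> 0" "\<forall>i\<in>S. a i \<ge> 0"
  shows "enorm r S (\<lambda>i. a i * c) = enorm r S a * c"
proof (cases "r = \<infinity>")
  case True
  have "Max ((\<lambda>i. a i * c) ` S) = Max (a ` S) * c"
    using S assms mono_Max_commute[of "\<lambda>x. x * c" "a ` S"]
    by (simp add: mono_def mult_right_mono image_image)
  then show ?thesis using True by (simp add: enorm_def)
qed (use real_of_ereal_pos[OF r] assms in \<open>simp add: enorm_def lnorm_mult_const\<close>)

lemma enorm_le_card_powr:
  assumes "\<forall>i\<in>S. 0 \<le> a i \<and> a i \<le> B"
  shows "enorm r S a \<le> real (card S) powr recip_e r * B"
proof (cases "r = \<infinity>")
  case True
  have "card S > 0" using S by (simp add: card_gt_0_iff)
  then show ?thesis using True S assms by (simp add: enorm_def recip_e_def)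
qed (use real_of_ereal_pos[OF r] assms in \<open>simp add: enorm_def recip_e_def lnorm_le_card_powr\<close>)

lemma enorm_le_card_powr_enorm:
  assumes "r \<le> s" "\<forall>i\<in>S. a i \<ge> 0"
  shows "enorm r S a \<le> real (card S) powr (recip_e r - recip_e s) * enorm s S a"
proof (cases "s = \<infinity>")
  case True
  have "enorm r S a \<le> real (card S) powr recip_e r * Max (a ` S)"
    using S assms by (intro enorm_le_card_powr) auto
  then show ?thesis using True by (simp add: enorm_def recip_e_def)
next
  case False
  obtain r' s' where rs: "r = ereal r'" "s = ereal s'" "0 < r'" "r' \<le> s'"
    using r assms(1) False by (rule ereal_le_finiteE)
  from lnorm_le_card_powr_lnorm[OF S(1) rs(3,4) assms(2)] show ?thesis
    using rs by (simp add: enorm_def recip_e_def)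
qed

lemma enorm_antimono:
  assumes "r \<le> s" "\<forall>i\<in>S. a i \<ge> 0"
  shows "enorm s S a \<le> enorm r S a"
proof (cases "s = \<infinity>")
  case True
  have "Max (a ` S) \<in> a ` S" using S by (intro Max_in) auto
  then obtain i where i: "i \<in> S" "Max (a ` S) = a i" by auto
  have "a i \<le> enorm r S a" by (rule le_enorm[OF assms(2) i(1)])
  then show ?thesis using True i by (simp add: enorm_def)
next
  case False
  obtain r' s' where rs: "r = ereal r'" "s = ereal s'" "0 < r'" "r' \<le> s'"
    using r assms(1) False by (rule ereal_le_finiteE)
  from lnorm_antimono_exponent[OF S(1) assms(2) rs(3,4)] show ?thesis
    using rs by (simp add: enorm_def)
qed

end

lemma lnorm_le_card_powr_enorm:
  assumes S: "finite S" "S \<noteq> {}" and s: "0 < s" "ereal s \<le> r" and a: "\<forall>i\<in>S. a i \<ge> 0"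
  shows "lnorm s S a \<le> real (card S) powr (1/s) * enorm r S a"
proof -
  have r: "r > 0" using order_less_le_trans[of 0 "ereal s" r] s by simp
  have "lnorm s S a \<le> real (card S) powr (recip_e s - recip_e r) * enorm r S a"
    using enorm_le_card_powr_enorm[OF S _ s(2) a] s by (simp add: enorm_def)
  also have "\<dots> \<le> real (card S) powr (1/s) * enorm r S a"
    using S recip_e_nonneg[OF r] enorm_nonneg[OF S r a]
    by (intro mult_right_mono powr_mono) (auto simp: recip_e_def Suc_le_eq card_gt_0_iff)
  finally show ?thesis .
qed

lemma Holder_lpnorm_e:
  fixes a b :: "'i \<Rightarrow> complex"
  assumes S: "finite S" "S \<noteq> {}" and p: "p \<ge> 1"
  shows "cmod (\<Sum>z\<in>S. a z * b z) \<le> lpnorm p S a * lpnorm_e (pstar p) S b"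
proof -
  have "cmod (\<Sum>z\<in>S. a z * b z) \<le> (\<Sum>z\<in>S. cmod (a z) * cmod (b z))"
    by (rule order_trans[OF norm_sum]) (simp add: norm_mult)
  also have "\<dots> \<le> lpnorm p S a * lpnorm_e (pstar p) S b"
  proof (cases "p = 1")
    case True
    have "(\<Sum>z\<in>S. cmod (a z) * cmod (b z)) \<le> (\<Sum>z\<in>S. cmod (a z) * Max ((\<lambda>i. cmod (b i)) ` S))"
      using S by (intro sum_mono mult_left_mono Max_ge) auto
    also have "\<dots> = lpnorm p S a * lpnorm_e (pstar p) S b"
      using True by (simp add: lpnorm_e_def pstar_def lpnorm_def sum_distrib_right sum_nonneg)
    finally show ?thesis .
  next
    case False
    hence p1: "p > 1" using p by simp
    define q where "q = p / (p - 1)"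
    have q: "q > 1" "1/p + 1/q = 1" using p1 unfolding q_def by (auto simp: field_simps)
    have "(\<Sum>z\<in>S. cmod (a z) * cmod (b z)) \<le> lnorm p S (\<lambda>z. cmod (a z)) * lnorm q S (\<lambda>z. cmod (b z))"
      by (rule Holder_lnorm) (use S p1 q in auto)
    also have "\<dots> = lpnorm p S a * lpnorm_e (pstar p) S b"
      using False by (simp add: lpnorm_def lnorm_def lpnorm_e_def pstar_def q_def)
    finally show ?thesis .
  qed
  finally show ?thesis .
qed

section \<open>Rademacher sums\<close>

lemma signs_0: "signs 0 = {[]}" by (auto simp: signs_def)

lemma signs_Suc: "signs (Suc m) = (\<lambda>(x, e). x # e) ` ({-1, 1} \<times> signs m)"
  by (auto simp: signs_def length_Suc_conv image_iff)

lemma finite_signs: "finite (signs m)"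
  by (induction m) (auto simp: signs_0 signs_Suc)

lemma sum_signs_Suc:
  "(\<Sum>e\<in>signs (Suc m). F e) = (\<Sum>e\<in>signs m. F (1 # e) + F ((-1) # e))"
proof -
  have inj: "inj_on (\<lambda>(x, e). x # e) ({-1::real, 1} \<times> signs m)" by (auto simp: inj_on_def)
  have "(\<Sum>e\<in>signs (Suc m). F e) = (\<Sum>p\<in>{-1::real, 1} \<times> signs m. F (fst p # snd p))"
    unfolding signs_Suc by (subst sum.reindex[OF inj]) (auto intro!: sum.cong)
  also have "\<dots> = (\<Sum>x\<in>{-1::real, 1}. \<Sum>e\<in>signs m. F (x # e))"
    by (simp add: sum.cartesian_product case_prod_beta)
  also have "\<dots> = (\<Sum>e\<in>signs m. F (1 # e) + F ((-1) # e))"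
    by (simp add: sum.distrib add.commute)
  finally show ?thesis .
qed

lemma card_signs: "card (signs m) = 2 ^ m"
proof (induction m)
  case 0 then show ?case by (simp add: signs_0)
next
  case (Suc m)
  have "real (card (signs (Suc m))) = (\<Sum>e\<in>signs (Suc m). 1)" by simp
  also have "\<dots> = (\<Sum>e\<in>signs m. 2)" by (subst sum_signs_Suc) simp
  also have "\<dots> = 2 * 2 ^ m" using Suc by simp
  finally show ?case by (metis of_nat_eq_iff of_nat_numeral of_nat_mult of_nat_power power_Suc)
qed

lemma sum_lessThan_Suc_Cons:
  "(\<Sum>i<Suc m. (x # e) ! i * a i) = x * a 0 + (\<Sum>i<m. e ! i * a (Suc i))"
  unfolding sum.lessThan_Suc_shift by simp

lemma exp_plus_exp_minus_le: "exp y + exp (- y) \<le> 2 * exp ((y::real)\<^sup>2 / 2)"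
proof -
  have key: "exp y + exp (- y) \<le> 2 * exp (y\<^sup>2 / 2)" if y: "y \<ge> 0" for y :: real
  proof -
    have "- (2*y) * (1/2) + ln (1 + (1/2) * (exp (2*y) - 1)) \<le> (2*y)\<^sup>2 / 8"
      using Hoeffdings_lemma_aux[of "2*y" "1/2"] y by simp
    hence "ln ((1 + exp (2*y)) / 2) \<le> y + y\<^sup>2 / 2"
      by (simp add: field_simps power2_eq_square)
    hence "exp (ln ((1 + exp (2*y)) / 2)) \<le> exp (y + y\<^sup>2 / 2)" by simp
    hence "(1 + exp (2*y)) / 2 \<le> exp (y + y\<^sup>2 / 2)"
      by (simp add: add_pos_pos)
    hence "exp (-y) * ((1 + exp (2*y)) / 2) \<le> exp (-y) * exp (y + y\<^sup>2 / 2)"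
      by (intro mult_left_mono) auto
    thus ?thesis by (simp add: field_simps flip: exp_add)
  qed
  show ?thesis
  proof (cases "y \<ge> 0")
    case True then show ?thesis using key by simp
  next
    case False then show ?thesis using key[of "-y"] by (simp add: add.commute)
  qed
qed

lemma sum_signs_exp_le:
  fixes a :: "nat \<Rightarrow> real"
  shows "(\<Sum>e\<in>signs m. exp (l * (\<Sum>i<m. e ! i * a i)))
           \<le> 2 ^ m * exp (l\<^sup>2 * (\<Sum>i<m. (a i)\<^sup>2) / 2)"
proof (induction m arbitrary: a)
  case 0 then show ?case by (simp add: signs_0)
next
  case (Suc m)
  define X where "X e = (\<Sum>i<m. e ! i * a (Suc i))" for e
  have "(\<Sum>e\<in>signs (Suc m). exp (l * (\<Sum>i<Suc m. e ! i * a i)))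
      = (\<Sum>e\<in>signs m. (exp (l * a 0) + exp (- (l * a 0))) * exp (l * X e))"
    unfolding sum_signs_Suc sum_lessThan_Suc_Cons X_def
    by (intro sum.cong) (auto simp: distrib_left exp_add[symmetric] algebra_simps)
  also have "\<dots> = (exp (l * a 0) + exp (- (l * a 0))) * (\<Sum>e\<in>signs m. exp (l * X e))"
    by (simp add: sum_distrib_left)
  also have "\<dots> \<le> (2 * exp ((l * a 0)\<^sup>2 / 2)) * (2 ^ m * exp (l\<^sup>2 * (\<Sum>i<m. (a (Suc i))\<^sup>2) / 2))"
    using Suc[of "\<lambda>i. a (Suc i)"] unfolding X_def
    by (intro mult_mono exp_plus_exp_minus_le) (auto intro: sum_nonneg add_nonneg_nonneg)
  also have "\<dots> = 2 ^ Suc m * exp (l\<^sup>2 * (\<Sum>i<Suc m. (a i)\<^sup>2) / 2)"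
    unfolding sum.lessThan_Suc_shift by (simp add: power_mult_distrib distrib_left add_divide_distrib exp_add)
  finally show ?case .
qed

lemma sum_signs_square:
  fixes a :: "nat \<Rightarrow> real"
  shows "(\<Sum>e\<in>signs m. (\<Sum>i<m. e ! i * a i)\<^sup>2) = 2 ^ m * (\<Sum>i<m. (a i)\<^sup>2)"
proof (induction m arbitrary: a)
  case 0 then show ?case by (simp add: signs_0)
next
  case (Suc m)
  define X where "X e = (\<Sum>i<m. e ! i * a (Suc i))" for e
  have "(\<Sum>e\<in>signs (Suc m). (\<Sum>i<Suc m. e ! i * a i)\<^sup>2)
      = (\<Sum>e\<in>signs m. 2 * (a 0)\<^sup>2 + 2 * (X e)\<^sup>2)"
    unfolding sum_signs_Suc sum_lessThan_Suc_Cons X_def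
    by (intro sum.cong) (auto simp: power2_eq_square algebra_simps)
  also have "\<dots> = 2 * (a 0)\<^sup>2 * 2 ^ m + 2 * (\<Sum>e\<in>signs m. (X e)\<^sup>2)"
    by (simp add: sum.distrib sum_distrib_left card_signs)
  also have "\<dots> = 2 ^ Suc m * (\<Sum>i<Suc m. (a i)\<^sup>2)"
    using Suc[of "\<lambda>i. a (Suc i)"] unfolding X_def sum.lessThan_Suc_shift by (simp add: algebra_simps)
  finally show ?case .
qed

lemma powr_le_exp_mult:
  fixes t r l :: real
  assumes "t \<ge> 0" "r > 0" "l > 0"
  shows "t powr r \<le> (r / (exp 1 * l)) powr r * exp (l * t)"
proof (cases "t = 0")
  case False
  hence t: "t > 0" using assms by simp
  define u where "u = l * t / r"
  have u: "u > 0" using t assms unfolding u_def by simp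
  have "r * ln u \<le> r * (u - 1)" using ln_le_minus_one[OF u] assms by (intro mult_left_mono) auto
  hence "r * ln t \<le> r * ln (r / (exp 1 * l)) + l * t"
    using t assms unfolding u_def by (simp add: ln_div ln_mult algebra_simps)
  hence "exp (r * ln t) \<le> exp (r * ln (r / (exp 1 * l)) + l * t)" by simp
  thus ?thesis using t assms by (simp add: powr_def exp_add)
qed simp

lemma sum_signs_abs_powr_le_exp:
  fixes a :: "nat \<Rightarrow> real"
  assumes r: "r > 0" and l: "l > 0"
  shows "(\<Sum>e\<in>signs m. \<bar>\<Sum>i<m. e ! i * a i\<bar> powr r)
           \<le> 2 * 2 ^ m * (r / (exp 1 * l)) powr r * exp (l\<^sup>2 * (\<Sum>i<m. (a i)\<^sup>2) / 2)"
proof -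
  define C where "C = (r / (exp 1 * l)) powr r"
  define X where "X e = (\<Sum>i<m. e ! i * a i)" for e
  have "\<bar>X e\<bar> powr r \<le> C * exp (l * \<bar>X e\<bar>)" for e
    unfolding C_def by (rule powr_le_exp_mult) (use r l in auto)
  also have "C * exp (l * \<bar>X e\<bar>) \<le> C * (exp (l * X e) + exp ((- l) * X e))" for e
    unfolding C_def by (intro mult_left_mono) (auto simp: abs_if)
  finally have "(\<Sum>e\<in>signs m. \<bar>X e\<bar> powr r)
       \<le> C * ((\<Sum>e\<in>signs m. exp (l * X e)) + (\<Sum>e\<in>signs m. exp ((- l) * X e)))"
    by (simp add: sum_mono sum_distrib_left sum.distrib distrib_left flip: sum.distrib)
  also have "\<dots> \<le> C * (2 ^ m * exp (l\<^sup>2 * (\<Sum>i<m. (a i)\<^sup>2) / 2) + 2 ^ m * exp ((- l)\<^sup>2 * (\<Sum>i<m. (a i)\<^sup>2) / 2))"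
    unfolding X_def C_def by (intro mult_left_mono add_mono sum_signs_exp_le) auto
  finally show ?thesis unfolding X_def C_def by (simp add: algebra_simps)
qed

text \<open>Khintchine's inequality: the previous bound with \<open>l = sqrt r / sqrt (\<Sum>i<m. (a i)\<^sup>2)\<close>.\<close>

lemma sum_signs_abs_powr_le:
  fixes a :: "nat \<Rightarrow> real"
  assumes r: "r \<ge> 2"
  shows "(\<Sum>e\<in>signs m. \<bar>\<Sum>i<m. e ! i * a i\<bar> powr r)
           \<le> 2 ^ m * r powr (r/2) * (\<Sum>i<m. (a i)\<^sup>2) powr (r/2)"
proof (cases "(\<Sum>i<m. (a i)\<^sup>2) = 0")
  case True
  hence "\<forall>i<m. a i = 0" by (subst (asm) sum_nonneg_eq_0_iff) auto
  thus ?thesis using True by simp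
next
  case False
  define s2 where "s2 = (\<Sum>i<m. (a i)\<^sup>2)"
  have s2: "s2 > 0" using False sum_nonneg[of "{..<m}" "\<lambda>i. (a i)\<^sup>2"] unfolding s2_def by force
  define l where "l = sqrt r / sqrt s2"
  have l: "l > 0" using s2 r unfolding l_def by simp
  have "(\<Sum>e\<in>signs m. \<bar>\<Sum>i<m. e ! i * a i\<bar> powr r)
      \<le> 2 * 2 ^ m * (r / (exp 1 * l)) powr r * exp (l\<^sup>2 * s2 / 2)"
    unfolding s2_def by (rule sum_signs_abs_powr_le_exp) (use r l in auto)
  also have "l\<^sup>2 * s2 = r" using s2 r unfolding l_def by (simp add: power_divide)
  also have "(r / (exp 1 * l)) powr r = r powr (r/2) * s2 powr (r/2) * exp (- r)"
  proof -
    have "r = sqrt r * sqrt r" using r by simp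
    hence "r / (exp 1 * l) = sqrt r * sqrt s2 * exp (- 1)"
      using r s2 unfolding l_def by (simp add: field_simps exp_minus)
    hence "(r / (exp 1 * l)) powr r = sqrt r powr r * sqrt s2 powr r * exp (- 1) powr r"
      using r s2 by (simp add: powr_mult)
    also have "sqrt r powr r = r powr (r/2)" using r by (simp add: powr_half_sqrt[symmetric] powr_powr)
    also have "sqrt s2 powr r = s2 powr (r/2)" using s2 by (simp add: powr_half_sqrt[symmetric] powr_powr)
    also have "exp (- 1) powr r = exp (- r)" by (simp add: powr_def)
    finally show ?thesis .
  qed
  also have "2 * 2 ^ m * (r powr (r/2) * s2 powr (r/2) * exp (- r)) * exp (r / 2)
      = 2 ^ m * r powr (r/2) * s2 powr (r/2) * (2 * exp (- r / 2))"
    by (simp add: field_simps flip: exp_add)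
  also have "\<dots> \<le> 2 ^ m * r powr (r/2) * s2 powr (r/2)"
  proof -
    have "2 \<le> exp (1::real)" using exp_ge_add_one_self[of 1] by simp
    also have "exp 1 \<le> exp (r / 2)" using r by simp
    finally have "2 * exp (- r / 2) \<le> 1" by (simp add: exp_minus field_simps)
    from mult_left_mono[OF this, of "2 ^ m * r powr (r/2) * s2 powr (r/2)"] show ?thesis by simp
  qed
  finally show ?thesis unfolding s2_def .
qed

lemma power2_powr_half: "((x::real)\<^sup>2) powr (r/2) = \<bar>x\<bar> powr r"
proof (cases "x = 0")
  case False
  have "x\<^sup>2 = \<bar>x\<bar> powr 2" using False by (simp add: powr_realpow[of "\<bar>x\<bar>" 2, simplified])
  moreover have "(\<bar>x\<bar> powr 2) powr (r/2) = \<bar>x\<bar> powr r" by (simp only: powr_powr) simp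
  ultimately show ?thesis by metis
qed simp

lemma abs_powr_powr_2_div: "r > 0 \<Longrightarrow> (\<bar>x::real\<bar> powr r) powr (2/r) = x\<^sup>2"
  using power2_powr_half[of x 2] by (simp add: powr_powr)

lemma sum_power2_powr_le:
  fixes w :: "nat \<Rightarrow> real"
  assumes "r \<ge> 2" "m \<ge> 1"
  shows "(\<Sum>i<m. (w i)\<^sup>2) powr (r/2) \<le> real m powr (r/2 - 1) * (\<Sum>i<m. \<bar>w i\<bar> powr r)"
proof -
  have "(\<Sum>i<m. (w i)\<^sup>2) \<le> real (card {..<m}) powr (1 - 1/(r/2)) * lnorm (r/2) {..<m} (\<lambda>i. (w i)\<^sup>2)"
    by (rule sum_le_card_powr_lnorm) (use assms in auto)
  hence "(\<Sum>i<m. (w i)\<^sup>2) powr (r/2) \<le> (real m powr (1 - 2/r) * lnorm (r/2) {..<m} (\<lambda>i. (w i)\<^sup>2)) powr (r/2)"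
    using assms by (intro powr_mono2) (auto intro: sum_nonneg)
  also have "\<dots> = (real m powr (1 - 2/r)) powr (r/2) * lnorm (r/2) {..<m} (\<lambda>i. (w i)\<^sup>2) powr (r/2)"
    by (simp add: powr_mult lnorm_nonneg)
  also have "(real m powr (1 - 2/r)) powr (r/2) = real m powr (r/2 - 1)"
  proof -
    have "(1 - 2/r) * (r/2) = r/2 - 1" using assms by (simp add: field_simps)
    thus ?thesis by (simp only: powr_powr)
  qed
  also have "lnorm (r/2) {..<m} (\<lambda>i. (w i)\<^sup>2) powr (r/2) = (\<Sum>i<m. \<bar>w i\<bar> powr r)"
    using assms by (subst lnorm_powr) (auto simp: power2_powr_half)
  finally show ?thesis .
qed

lemma sum_signs_lnorm_le_moment:
  fixes w :: "nat \<Rightarrow> 'i \<Rightarrow> real"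
  assumes S: "finite S" and r: "r \<ge> 1" and m: "m \<ge> 1" and K: "K \<ge> 0"
    and moment: "\<And>z. (\<Sum>e\<in>signs m. \<bar>\<Sum>i<m. e ! i * w i z\<bar> powr r)
      \<le> 2 ^ m * K * (\<Sum>i<m. \<bar>w i z\<bar> powr r)"
    and wB: "\<forall>i<m. lnorm r S (\<lambda>z. \<bar>w i z\<bar>) \<le> B"
  shows "(\<Sum>e\<in>signs m. lnorm r S (\<lambda>z. \<bar>\<Sum>i<m. e ! i * w i z\<bar>)) \<le> 2 ^ m * (K * m) powr (1/r) * B"
proof -
  have B: "B \<ge> 0" using wB m lnorm_nonneg[of r S "\<lambda>z. \<bar>w 0 z\<bar>"] by force
  define U where "U e z = (\<Sum>i<m. e ! i * w i z)" for e z
  have "(\<Sum>e\<in>signs m. lnorm r S (\<lambda>z. \<bar>U e z\<bar>) powr r) = (\<Sum>z\<in>S. \<Sum>e\<in>signs m. \<bar>U e z\<bar> powr r)"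
    using r by (subst sum.swap) (intro sum.cong refl lnorm_powr, auto)
  also have "\<dots> \<le> (\<Sum>z\<in>S. 2 ^ m * K * (\<Sum>i<m. \<bar>w i z\<bar> powr r))"
    unfolding U_def by (intro sum_mono moment)
  also have "\<dots> = 2 ^ m * K * (\<Sum>i<m. lnorm r S (\<lambda>z. \<bar>w i z\<bar>) powr r)"
    using r by (simp add: sum_distrib_left sum.swap[of _ S] lnorm_powr)
  also have "\<dots> \<le> 2 ^ m * K * (\<Sum>i<m. B powr r)"
    using wB r K by (intro mult_left_mono sum_mono powr_mono2) (auto simp: lnorm_nonneg)
  finally have T: "(\<Sum>e\<in>signs m. lnorm r S (\<lambda>z. \<bar>U e z\<bar>) powr r) \<le> 2 ^ m * (K * m * B powr r)"
    by (simp add: mult_ac)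
  have "(\<Sum>e\<in>signs m. lnorm r S (\<lambda>z. \<bar>U e z\<bar>))
     \<le> real (card (signs m)) powr (1 - 1/r) * (2 ^ m * (K * m * B powr r)) powr (1/r)"
    by (rule sum_le_card_powr_bound[OF finite_signs r _ T]) (simp add: lnorm_nonneg)
  also have "(2 ^ m * (K * m * B powr r)) powr (1/r) = (2 ^ m) powr (1/r) * ((K * m) powr (1/r) * B)"
    using r B K by (simp add: powr_mult powr_powr)
  also have "real (card (signs m)) powr (1 - 1/r) * ((2 ^ m) powr (1/r) * ((K * m) powr (1/r) * B))
      = (2 ^ m) powr (1 - 1/r + 1/r) * ((K * m) powr (1/r) * B)"
    by (simp add: card_signs powr_add[symmetric])
  finally show ?thesis unfolding U_def by simp
qed

lemma sum_signs_lnorm_le_ge_2: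
  fixes w :: "nat \<Rightarrow> 'i \<Rightarrow> real"
  assumes S: "finite S" and r: "r \<ge> 2" and m: "m \<ge> 1"
    and wB: "\<forall>i<m. lnorm r S (\<lambda>z. \<bar>w i z\<bar>) \<le> B"
  shows "(\<Sum>e\<in>signs m. lnorm r S (\<lambda>z. \<bar>\<Sum>i<m. e ! i * w i z\<bar>)) \<le> 2 ^ m * sqrt r * sqrt m * B"
proof -
  define K where "K = r powr (r/2) * real m powr (r/2 - 1)"
  have "(\<Sum>e\<in>signs m. \<bar>\<Sum>i<m. e ! i * w i z\<bar> powr r) \<le> 2 ^ m * K * (\<Sum>i<m. \<bar>w i z\<bar> powr r)" for z
  proof -
    have "(\<Sum>e\<in>signs m. \<bar>\<Sum>i<m. e ! i * w i z\<bar> powr r) \<le> 2 ^ m * r powr (r/2) * (\<Sum>i<m. (w i z)\<^sup>2) powr (r/2)"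
      by (rule sum_signs_abs_powr_le[OF r])
    also have "\<dots> \<le> 2 ^ m * r powr (r/2) * (real m powr (r/2 - 1) * (\<Sum>i<m. \<bar>w i z\<bar> powr r))"
      by (intro mult_left_mono sum_power2_powr_le r m) auto
    finally show ?thesis unfolding K_def by (simp add: mult_ac)
  qed
  from sum_signs_lnorm_le_moment[OF S _ m _ this wB]
  have "(\<Sum>e\<in>signs m. lnorm r S (\<lambda>z. \<bar>\<Sum>i<m. e ! i * w i z\<bar>)) \<le> 2 ^ m * (K * m) powr (1/r) * B"
    using r unfolding K_def by simp
  also have "(K * m) powr (1/r) = sqrt r * sqrt m"
  proof -
    have "K * m = r powr (r/2) * real m powr (r/2)"
      using m powr_mult_base[of "real m" "r/2 - 1"] unfolding K_def by (simp add: mult_ac)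
    thus ?thesis using r by (simp add: powr_mult powr_powr powr_half_sqrt)
  qed
  finally show ?thesis by (simp add: mult_ac)
qed

lemma sum_signs_lnorm_le_le_2:
  fixes w :: "nat \<Rightarrow> 'i \<Rightarrow> real"
  assumes S: "finite S" and r1: "r \<ge> 1" and r2: "r \<le> 2" and m: "m \<ge> 1"
    and wB: "\<forall>i<m. lnorm r S (\<lambda>z. \<bar>w i z\<bar>) \<le> B"
  shows "(\<Sum>e\<in>signs m. lnorm r S (\<lambda>z. \<bar>\<Sum>i<m. e ! i * w i z\<bar>)) \<le> 2 ^ m * real m powr (1/r) * B"
proof -
  have "(\<Sum>e\<in>signs m. \<bar>U e\<bar> powr r) \<le> 2 ^ m * 1 * (\<Sum>i<m. \<bar>w i z\<bar> powr r)"
    if U: "U = (\<lambda>e. \<Sum>i<m. e ! i * w i z)" for U z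
  proof -
    have "(\<Sum>e\<in>signs m. \<bar>U e\<bar> powr r)
        \<le> real (card (signs m)) powr (1 - 1/(2/r)) * lnorm (2/r) (signs m) (\<lambda>e. \<bar>U e\<bar> powr r)"
      by (rule sum_le_card_powr_lnorm) (use r1 r2 finite_signs in auto)
    also have "lnorm (2/r) (signs m) (\<lambda>e. \<bar>U e\<bar> powr r) = (\<Sum>e\<in>signs m. (U e)\<^sup>2) powr (r/2)"
      unfolding lnorm_def using r1 by (simp add: powr_powr abs_powr_powr_2_div)
    also have "(\<Sum>e\<in>signs m. (U e)\<^sup>2) = 2 ^ m * (\<Sum>i<m. (w i z)\<^sup>2)"
      unfolding U by (rule sum_signs_square)
    also have "real (card (signs m)) powr (1 - 1/(2/r)) * (2 ^ m * (\<Sum>i<m. (w i z)\<^sup>2)) powr (r/2)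
        = 2 ^ m * (\<Sum>i<m. (w i z)\<^sup>2) powr (r/2)"
    proof -
      have "real (card (signs m)) powr (1 - 1/(2/r)) * (2 ^ m) powr (r/2) = (2 ^ m) powr (1 - 1/(2/r) + r/2)"
        by (simp add: card_signs powr_add[symmetric])
      also have "1 - 1/(2/r) + r/2 = 1" by simp
      finally show ?thesis by (simp add: powr_mult sum_nonneg)
    qed
    also have "(\<Sum>i<m. (w i z)\<^sup>2) powr (r/2) \<le> (\<Sum>i<m. \<bar>w i z\<bar> powr r)"
      using powr_sum_le_sum_powr[of "{..<m}" "\<lambda>i. (w i z)\<^sup>2" "r/2"] r1 r2 by (simp add: power2_powr_half)
    finally show ?thesis by simp
  qed
  from sum_signs_lnorm_le_moment[OF S r1 m _ this wB] show ?thesis by simp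
qed

section \<open>Pauli strings\<close>

lemma bit_add_power2_above:
  fixes j :: nat assumes "k < n"
  shows "(j + 2 ^ n) div 2 ^ k mod 2 = j div 2 ^ k mod 2"
proof -
  have "(2::nat) ^ n = 2 ^ k * 2 ^ (n - k)" using assms by (simp flip: power_add)
  hence "(j + 2 ^ n) div 2 ^ k = j div 2 ^ k + 2 ^ (n - k)" by simp
  moreover have "even ((2::nat) ^ (n - k))" using assms by simp
  ultimately show ?thesis by (simp add: mod_add_right_eq[symmetric] even_iff_mod_2_eq_zero)
qed

lemma sum_lessThan_add:
  "(\<Sum>i<A + B. F i) = (\<Sum>i<A. F i) + (\<Sum>j<B. F (A + j) :: 'a::comm_monoid_add)" for A B :: nat
  by (induction B) (simp_all add: add.assoc)

lemma sum_prod_bits: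
  fixes g :: "nat \<Rightarrow> nat \<Rightarrow> 'a::comm_semiring_1"
  shows "(\<Sum>i<2 ^ n. \<Prod>k<n. g k (i div 2 ^ k mod 2)) = (\<Prod>k<n. (g k 0 + g k 1 :: 'a::comm_semiring_1))"
proof (induction n)
  case 0
  show ?case by simp
next
  case (Suc n)
  let ?F = "\<lambda>n i. \<Prod>k<n. g k (i div 2 ^ k mod 2)"
  have lo: "?F (Suc n) j = ?F n j * g n 0" if "j < 2 ^ n" for j
    using that by simp
  have hi: "?F (Suc n) (2 ^ n + j) = ?F n j * g n 1" if "j < 2 ^ n" for j
  proof -
    have "(2 ^ n + j) div 2 ^ n = 1" using that by simp
    moreover have "?F n (2 ^ n + j) = ?F n j"
      by (intro prod.cong refl) (simp add: bit_add_power2_above add.commute[of "2 ^ n"])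
    ultimately show ?thesis by simp
  qed
  have e: "(2::nat) ^ Suc n = 2 ^ n + 2 ^ n" by simp
  have "(\<Sum>i<2 ^ Suc n. ?F (Suc n) i) = (\<Sum>j<2 ^ n. ?F (Suc n) j) + (\<Sum>j<2 ^ n. ?F (Suc n) (2 ^ n + j))"
    unfolding e by (rule sum_lessThan_add)
  also have "\<dots> = (\<Sum>j<2 ^ n. ?F n j * g n 0) + (\<Sum>j<2 ^ n. ?F n j * g n 1)"
    using lo hi by (intro arg_cong2[where f="(+)"] sum.cong) auto
  also have "\<dots> = (\<Prod>k<n. (g k 0 + g k 1)) * (g n 0 + g n 1)"
    using Suc by (simp add: sum_distrib_right[symmetric] distrib_left)
  finally show ?case by simp
qed

lemma pstrings_0: "pstrings 0 = {[]}" by (auto simp: pstrings_def)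

lemma pstrings_Suc: "pstrings (Suc n) = (\<lambda>(z, a). z @ [a]) ` (pstrings n \<times> {0..<4})"
proof
  show "pstrings (Suc n) \<subseteq> (\<lambda>(z, a). z @ [a]) ` (pstrings n \<times> {0..<4})"
  proof
    fix y assume y: "y \<in> pstrings (Suc n)"
    hence l: "length y = Suc n" and st: "set y \<subseteq> {0..<4}" by (auto simp: pstrings_def)
    from l obtain z a where za: "y = z @ [a]" "length z = n" by (auto simp: length_Suc_conv_rev)
    show "y \<in> (\<lambda>(z, a). z @ [a]) ` (pstrings n \<times> {0..<4})"
      by (rule image_eqI[of _ _ "(z, a)"]) (use za st in \<open>auto simp: pstrings_def\<close>)
  qed
qed (auto simp: pstrings_def)

lemma finite_pstrings: "finite (pstrings n)"
  by (induction n) (auto simp: pstrings_Suc pstrings_0)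

lemma sum_pstrings_prod:
  fixes g :: "nat \<Rightarrow> nat \<Rightarrow> 'a::comm_semiring_1"
  shows "(\<Sum>z\<in>pstrings n. \<Prod>k<n. g k (z ! k)) = (\<Prod>k<n. (\<Sum>a<4. g k a :: 'a::comm_semiring_1))"
proof (induction n)
  case 0 then show ?case by (simp add: pstrings_0)
next
  case (Suc n)
  have inj: "inj_on (\<lambda>(z, a). z @ [a]) (pstrings n \<times> {0..<4::nat})" by (auto simp: inj_on_def)
  have "(\<Sum>z\<in>pstrings (Suc n). \<Prod>k<Suc n. g k (z ! k))
      = (\<Sum>p\<in>pstrings n \<times> {0..<4}. \<Prod>k<Suc n. g k ((fst p @ [snd p]) ! k))"
    unfolding pstrings_Suc by (subst sum.reindex[OF inj]) (auto intro!: sum.cong)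
  also have "\<dots> = (\<Sum>(z,a)\<in>pstrings n \<times> {0..<4}. (\<Prod>k<n. g k (z ! k)) * g n a)"
    by (rule sum.cong) (auto simp: pstrings_def nth_append)
  also have "\<dots> = (\<Sum>z\<in>pstrings n. \<Sum>a<4. (\<Prod>k<n. g k (z ! k)) * g n a)"
    by (simp add: sum.cartesian_product lessThan_atLeast0)
  also have "\<dots> = (\<Prod>k<n. (\<Sum>a<4. g k a)) * (\<Sum>a<4. g n a)"
    using Suc by (simp add: sum_distrib_left[symmetric] sum_distrib_right[symmetric])
  finally show ?case by simp
qed

lemma bits_eq_imp_eq:
  fixes i j :: nat
  assumes "i < 2 ^ n" "j < 2 ^ n" "\<forall>k<n. i div 2 ^ k mod 2 = j div 2 ^ k mod 2"
  shows "i = j"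
  using assms
proof (induction n arbitrary: i j)
  case 0 then show ?case by simp
next
  case (Suc n)
  have "i mod 2 = j mod 2" using Suc.prems(3)[rule_format, of 0] by simp
  moreover have "i div 2 = j div 2"
  proof (rule Suc.IH)
    show "i div 2 < 2 ^ n" "j div 2 < 2 ^ n" using Suc.prems by auto
    show "\<forall>k<n. i div 2 div 2 ^ k mod 2 = j div 2 div 2 ^ k mod 2"
      using Suc.prems(3) by (auto simp: div_mult2_eq[symmetric] mult.commute)
  qed
  ultimately show ?case by (metis div_mult_mod_eq)
qed

lemma sum_lessThan_4: "(\<Sum>a<(4::nat). f a) = f 0 + f 1 + f 2 + (f 3 :: complex)"
  by (simp add: eval_nat_numeral)

lemma sum_sigma_mult_sigma:
  assumes "r < 2" "s < 2" "r' < 2" "s' < 2"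
  shows "(\<Sum>a<4. Defs.sigma a r s * Defs.sigma a r' s') = (if r = s' \<and> s = r' then 2 else 0)"
  unfolding sum_lessThan_4
  using less_2_cases[OF assms(1)] less_2_cases[OF assms(2)] less_2_cases[OF assms(3)] less_2_cases[OF assms(4)]
  by (elim disjE) (simp_all add: Defs.sigma_def)

lemma sigma_trace: "a < 4 \<Longrightarrow> Defs.sigma a 0 0 + Defs.sigma a 1 1 = (if a = 0 then 2 else 0)"
  by (auto simp: Defs.sigma_def)

lemma sigma_cnj: "cnj (Defs.sigma a r s) = Defs.sigma a s r"
  by (auto simp: Defs.sigma_def)

lemma pauli_carrier_mat[simp]: "pauli n z \<in> carrier_mat (2^n) (2^n)" by (simp add: pauli_def)

lemma pauli_dim[simp]: "dim_row (pauli n z) = 2^n" "dim_col (pauli n z) = 2^n" by (simp_all add: pauli_def)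

lemma pauli_index: "i < 2^n \<Longrightarrow> j < 2^n \<Longrightarrow>
   pauli n z $$ (i,j) = (\<Prod>k<n. Defs.sigma (z!k) (i div 2^k mod 2) (j div 2^k mod 2))"
  by (simp add: pauli_def)

lemma bits_differ:
  fixes i j :: nat
  assumes "i < 2^n" "j < 2^n" "i \<noteq> j"
  shows "\<exists>k<n. i div 2^k mod 2 \<noteq> j div 2^k mod 2"
  using bits_eq_imp_eq[OF assms(1,2)] assms(3) by blast

lemma pauli_replicate_0: "pauli n (replicate n 0) = 1\<^sub>m (2^n)"
proof (rule eq_matI)
  fix i j assume ij: "i < dim_row (1\<^sub>m (2^n))" "j < dim_col (1\<^sub>m (2^n))"
  hence i: "i < 2^n" and j: "j < 2^n" by auto
  have "pauli n (replicate n 0) $$ (i, j) = (\<Prod>k<n. Defs.sigma 0 (i div 2^k mod 2) (j div 2^k mod 2))"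
    using i j by (simp add: pauli_index)
  also have "\<dots> = (if i = j then 1 else 0)"
  proof (cases "i = j")
    case True then show ?thesis by (simp add: Defs.sigma_def)
  next
    case False
    then obtain k where "k < n" "i div 2^k mod 2 \<noteq> j div 2^k mod 2" using bits_differ i j by blast
    thus ?thesis using False by (intro prod_zero[THEN trans]) (auto simp: Defs.sigma_def)
  qed
  finally show "pauli n (replicate n 0) $$ (i, j) = 1\<^sub>m (2^n) $$ (i, j)" using i j by simp
qed (auto simp: pauli_def)

lemma mtrace_mult:
  assumes "A \<in> carrier_mat d d" "B \<in> carrier_mat d d"
  shows "mtrace (A * B) = (\<Sum>i<d. \<Sum>j<d. A $$ (i,j) * B $$ (j,i))"
  using assms by (auto simp: mtrace_def scalar_prod_def lessThan_atLeast0 intro!: sum.cong)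

lemma nzstrings_nth_nonzero:
  assumes "z \<in> nzstrings n" shows "\<exists>k<n. z ! k \<noteq> 0"
proof (rule ccontr)
  assume "\<not> ?thesis"
  hence "z = replicate n 0" using assms by (intro nth_equalityI) (auto simp: nzstrings_def pstrings_def)
  thus False using assms by (simp add: nzstrings_def)
qed

lemma mtrace_pauli:
  assumes "z \<in> nzstrings n" shows "mtrace (pauli n z) = 0"
proof -
  have "mtrace (pauli n z) = (\<Sum>i<2^n. \<Prod>k<n. Defs.sigma (z!k) (i div 2^k mod 2) (i div 2^k mod 2))"
    by (auto simp: mtrace_def pauli_index intro!: sum.cong)
  also have "\<dots> = (\<Prod>k<n. Defs.sigma (z!k) 0 0 + Defs.sigma (z!k) 1 1)"
    by (rule sum_prod_bits[where g="\<lambda>k b. Defs.sigma (z!k) b b"])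
  also have "\<dots> = 0"
  proof -
    obtain k where k: "k < n" "z ! k \<noteq> 0" using nzstrings_nth_nonzero[OF assms] by blast
    have zs: "z \<in> pstrings n" using assms by (simp add: nzstrings_def)
    hence "z ! k \<in> set z" using k by (simp add: pstrings_def)
    hence "z ! k < 4" using zs by (auto simp: pstrings_def)
    hence "Defs.sigma (z!k) 0 0 + Defs.sigma (z!k) 1 1 = 0" using k sigma_trace by simp
    thus ?thesis using k by (intro prod_zero) auto
  qed
  finally show ?thesis .
qed

lemma cnj_pauli:
  assumes "i < 2^n" "j < 2^n"
  shows "cnj (pauli n z $$ (i,j)) = pauli n z $$ (j,i)"
  using assms by (simp add: pauli_index sigma_cnj cnj_prod)

lemma sum_pauli_mult_pauli:
  assumes "i < 2^n" "j < 2^n" "k < 2^n" "l < 2^n"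
  shows "(\<Sum>z\<in>pstrings n. pauli n z $$ (i,j) * pauli n z $$ (k,l)) = (if i = l \<and> j = k then 2^n else 0)"
proof -
  let ?b = "\<lambda>x t. x div 2^t mod 2"
  have "(\<Sum>z\<in>pstrings n. pauli n z $$ (i,j) * pauli n z $$ (k,l))
      = (\<Sum>z\<in>pstrings n. \<Prod>t<n. Defs.sigma (z!t) (?b i t) (?b j t) * Defs.sigma (z!t) (?b k t) (?b l t))"
    using assms by (simp add: pauli_index prod.distrib)
  also have "\<dots> = (\<Prod>t<n. \<Sum>a<4. Defs.sigma a (?b i t) (?b j t) * Defs.sigma a (?b k t) (?b l t))"
    by (rule sum_pstrings_prod[where g="\<lambda>t a. Defs.sigma a (?b i t) (?b j t) * Defs.sigma a (?b k t) (?b l t)"])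
  also have "\<dots> = (\<Prod>t<n. if ?b i t = ?b l t \<and> ?b j t = ?b k t then 2 else 0)"
    by (intro prod.cong refl sum_sigma_mult_sigma) auto
  also have "\<dots> = (if i = l \<and> j = k then 2^n else 0)"
  proof (cases "i = l \<and> j = k")
    case True then show ?thesis by simp
  next
    case False
    then obtain t where "t < n" "?b i t \<noteq> ?b l t \<or> ?b j t \<noteq> ?b k t"
      using bits_differ assms by blast
    then show ?thesis using False by (intro prod_zero[THEN trans]) auto
  qed
  finally show ?thesis .
qed

lemma sum_sum_delta:
  assumes "k < (N::nat)" "l < N"
  shows "(\<Sum>i<N. \<Sum>j<N. if i = l \<and> j = k then c else 0) = (c::'a::comm_monoid_add)"
proof -
  have "(\<Sum>j<N. if i = l \<and> j = k then c else 0) = (if i = l then c else 0)" for i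
    using assms by (cases "i = l") simp_all
  hence "(\<Sum>i<N. \<Sum>j<N. if i = l \<and> j = k then c else 0) = (\<Sum>i<N. if i = l then c else 0)" by simp
  also have "\<dots> = c" using assms by (subst sum.delta) auto
  finally show ?thesis .
qed

lemma pauli_expansion_entry:
  assumes A: "A \<in> carrier_mat (2^n) (2^n)" and kl: "k < 2^n" "l < 2^n"
  shows "(\<Sum>z\<in>pstrings n. (mtrace (pauli n z * A) / 2^n) * pauli n z $$ (k,l)) = A $$ (k,l)"
proof -
  have "(\<Sum>z\<in>pstrings n. (mtrace (pauli n z * A) / 2^n) * pauli n z $$ (k,l))
     = (\<Sum>z\<in>pstrings n. \<Sum>i<2^n. \<Sum>j<2^n. A $$ (j,i) * (pauli n z $$ (i,j) * pauli n z $$ (k,l)) / 2^n)"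
  proof (rule sum.cong[OF refl])
    fix z
    show "(mtrace (pauli n z * A) / 2^n) * pauli n z $$ (k,l)
       = (\<Sum>i<2^n. \<Sum>j<2^n. A $$ (j,i) * (pauli n z $$ (i,j) * pauli n z $$ (k,l)) / 2^n)"
      unfolding mtrace_mult[OF pauli_carrier_mat A] sum_divide_distrib sum_distrib_right
      by (intro sum.cong refl) (simp add: mult_ac)
  qed
  also have "\<dots> = (\<Sum>i<2^n. \<Sum>j<2^n. A $$ (j,i) * (\<Sum>z\<in>pstrings n. pauli n z $$ (i,j) * pauli n z $$ (k,l)) / 2^n)"
    by (simp add: sum.swap[of _ "pstrings n"] sum_distrib_left sum_divide_distrib)
  also have "\<dots> = (\<Sum>i<2^n. \<Sum>j<2^n. A $$ (j,i) * (if i = l \<and> j = k then 2^n else 0) / 2^n)"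
    using kl by (intro sum.cong refl) (simp add: sum_pauli_mult_pauli)
  also have "\<dots> = A $$ (k,l)"
  proof -
    have "A $$ (j,i) * (if i = l \<and> j = k then 2^n else 0) / 2^n = (if i = l \<and> j = k then A $$ (k,l) else 0)" for i j
      by auto
    thus ?thesis using kl by (simp only: sum_sum_delta)
  qed
  finally show ?thesis .
qed

section \<open>Pauli expansion and unital channels\<close>

definition msum :: "nat \<Rightarrow> ('a \<Rightarrow> complex mat) \<Rightarrow> 'a set \<Rightarrow> complex mat" where
  "msum d f X = Matrix.mat d d (\<lambda>(i,j). \<Sum>x\<in>X. f x $$ (i,j))"

lemma msum_carrier_mat[simp]: "msum d f X \<in> carrier_mat d d" by (simp add: msum_def)

lemma msum_dim[simp]: "dim_row (msum d f X) = d" "dim_col (msum d f X) = d" by (simp_all add: msum_def)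

lemma msum_index: "i < d \<Longrightarrow> j < d \<Longrightarrow> msum d f X $$ (i,j) = (\<Sum>x\<in>X. f x $$ (i,j))"
  by (simp add: msum_def)

lemma msum_empty: "msum d f {} = 0\<^sub>m d d"
  by (rule eq_matI) (auto simp: msum_def)

lemma msum_insert:
  assumes "finite X" "x \<notin> X" "f x \<in> carrier_mat d d"
  shows "msum d f (insert x X) = f x + msum d f X"
  by (rule eq_matI) (use assms in \<open>auto simp: msum_def\<close>)

lemma msum_cong: "(\<And>x. x \<in> X \<Longrightarrow> f x = g x) \<Longrightarrow> msum d f X = msum d g X"
  by (simp add: msum_def)

lemma quantum_channelD:
  assumes "quantum_channel n \<Phi>"
  shows "\<And>A. A \<in> carrier_mat (2^n) (2^n) \<Longrightarrow> \<Phi> A \<in> carrier_mat (2^n) (2^n)"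
    and "\<And>A B. A \<in> carrier_mat (2^n) (2^n) \<Longrightarrow> B \<in> carrier_mat (2^n) (2^n) \<Longrightarrow>
      \<Phi> (A + B) = \<Phi> A + \<Phi> B"
    and "\<And>A c. A \<in> carrier_mat (2^n) (2^n) \<Longrightarrow> \<Phi> (c \<cdot>\<^sub>m A) = c \<cdot>\<^sub>m \<Phi> A"
    and "\<And>A. A \<in> carrier_mat (2^n) (2^n) \<Longrightarrow> mtrace (\<Phi> A) = mtrace A"
  using assms unfolding quantum_channel_def Let_def by auto

lemma quantum_channel_zero:
  assumes "quantum_channel n \<Phi>"
  shows "\<Phi> (0\<^sub>m (2^n) (2^n)) = 0\<^sub>m (2^n) (2^n)"
proof -
  have z: "0\<^sub>m (2^n) (2^n) = (0::complex) \<cdot>\<^sub>m 0\<^sub>m (2^n) (2^n)" by (rule eq_matI) auto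
  have c: "\<Phi> (0\<^sub>m (2^n) (2^n)) \<in> carrier_mat (2^n) (2^n)" using quantum_channelD(1)[OF assms] by simp
  have "\<Phi> (0\<^sub>m (2^n) (2^n)) = 0 \<cdot>\<^sub>m \<Phi> (0\<^sub>m (2^n) (2^n))"
    by (subst z) (rule quantum_channelD(3)[OF assms], simp)
  also have "\<dots> = 0\<^sub>m (2^n) (2^n)" using c by (intro eq_matI) auto
  finally show ?thesis .
qed

lemma quantum_channel_msum:
  assumes qc: "quantum_channel n \<Phi>" and X: "finite X" and f: "\<forall>x\<in>X. f x \<in> carrier_mat (2^n) (2^n)"
  shows "\<Phi> (msum (2^n) f X) = msum (2^n) (\<lambda>x. \<Phi> (f x)) X"
  using X f
proof (induction X rule: finite_induct)
  case empty then show ?case by (simp add: msum_empty quantum_channel_zero[OF qc])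
next
  case (insert x X)
  have "\<Phi> (msum (2^n) f (insert x X)) = \<Phi> (f x + msum (2^n) f X)"
    using insert by (simp add: msum_insert)
  also have "\<dots> = \<Phi> (f x) + \<Phi> (msum (2^n) f X)" using insert by (intro quantum_channelD(2)[OF qc]) auto
  also have "\<dots> = msum (2^n) (\<lambda>x. \<Phi> (f x)) (insert x X)"
    using insert quantum_channelD(1)[OF qc] by (simp add: msum_insert)
  finally show ?case .
qed

lemma pauli_expansion:
  assumes "A \<in> carrier_mat (2^n) (2^n)"
  shows "A = msum (2^n) (\<lambda>z. fI_hat n A z \<cdot>\<^sub>m pauli n z) (pstrings n)"
proof (rule eq_matI)
  fix i j assume ij: "i < dim_row (msum (2^n) (\<lambda>z. fI_hat n A z \<cdot>\<^sub>m pauli n z) (pstrings n))"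
    "j < dim_col (msum (2^n) (\<lambda>z. fI_hat n A z \<cdot>\<^sub>m pauli n z) (pstrings n))"
  hence "i < 2^n" "j < 2^n" by auto
  thus "A $$ (i, j) = msum (2^n) (\<lambda>z. fI_hat n A z \<cdot>\<^sub>m pauli n z) (pstrings n) $$ (i, j)"
    using pauli_expansion_entry[OF assms, of i j] by (simp add: msum_index fI_hat_def)
qed (use assms in auto)

lemma mtrace_msum_right:
  assumes "B \<in> carrier_mat d d" "\<forall>x\<in>X. g x \<in> carrier_mat d d"
  shows "mtrace (B * msum d g X) = (\<Sum>x\<in>X. mtrace (B * g x))"
proof -
  have "mtrace (B * msum d g X) = (\<Sum>i<d. \<Sum>j<d. B $$ (i,j) * (\<Sum>x\<in>X. g x $$ (j,i)))"
    using assms by (simp add: mtrace_mult msum_index)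
  also have "\<dots> = (\<Sum>x\<in>X. \<Sum>i<d. \<Sum>j<d. B $$ (i,j) * g x $$ (j,i))"
    by (simp add: sum_distrib_left sum.swap[of _ X])
  also have "\<dots> = (\<Sum>x\<in>X. mtrace (B * g x))"
    using assms by (intro sum.cong refl) (simp add: mtrace_mult[OF assms(1)])
  finally show ?thesis .
qed

lemma mtrace_msum_left:
  assumes "H \<in> carrier_mat d d" "\<forall>x\<in>X. g x \<in> carrier_mat d d"
  shows "mtrace (msum d g X * H) = (\<Sum>x\<in>X. mtrace (g x * H))"
proof -
  have "mtrace (msum d g X * H) = (\<Sum>i<d. \<Sum>j<d. (\<Sum>x\<in>X. g x $$ (i,j)) * H $$ (j,i))"
    by (subst mtrace_mult[OF msum_carrier_mat assms(1)]) (auto intro!: sum.cong simp: msum_index)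
  also have "\<dots> = (\<Sum>x\<in>X. \<Sum>i<d. \<Sum>j<d. g x $$ (i,j) * H $$ (j,i))"
    by (simp add: sum_distrib_right sum.swap[of _ X])
  also have "\<dots> = (\<Sum>x\<in>X. mtrace (g x * H))"
    using assms by (intro sum.cong refl) (simp add: mtrace_mult[OF _ assms(1)])
  finally show ?thesis .
qed

lemma mtrace_smult_right:
  assumes "B \<in> carrier_mat d d" "M \<in> carrier_mat d d"
  shows "mtrace (B * (c \<cdot>\<^sub>m M)) = c * mtrace (B * M)"
  using assms by (simp add: mtrace_mult sum_distrib_left mult_ac)

lemma mtrace_smult_left:
  assumes "H \<in> carrier_mat d d" "M \<in> carrier_mat d d"
  shows "mtrace ((c \<cdot>\<^sub>m M) * H) = c * mtrace (M * H)"
  using assms mtrace_mult[of "c \<cdot>\<^sub>m M" d H] mtrace_mult[OF assms(2) assms(1)] by (simp add: sum_distrib_left mult_ac)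

lemma replicate_0_in_pstrings: "replicate n 0 \<in> pstrings n" by (cases n) (auto simp: pstrings_def)

lemma pstrings_eq_insert_nzstrings: "pstrings n = insert (replicate n 0) (nzstrings n)"
  using replicate_0_in_pstrings by (auto simp: nzstrings_def)

lemma finite_nzstrings: "finite (nzstrings n)"
  using finite_pstrings by (simp add: nzstrings_def)

lemma fI_hat_unital_channel:
  assumes u: "unital_channel n \<Phi>" and A: "A \<in> carrier_mat (2^n) (2^n)" and z: "z \<in> nzstrings n"
  shows "fI_hat n (\<Phi> A) z = (\<Sum>x\<in>nzstrings n. repM n \<Phi> z x * fI_hat n A x)"
proof -
  have qc: "quantum_channel n \<Phi>" and un: "\<Phi> (1\<^sub>m (2^n)) = 1\<^sub>m (2^n)" using u by (auto simp: unital_channel_def)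
  have "\<Phi> A = \<Phi> (msum (2^n) (\<lambda>x. fI_hat n A x \<cdot>\<^sub>m pauli n x) (pstrings n))"
    using pauli_expansion[OF A] by simp
  also have "\<dots> = msum (2^n) (\<lambda>x. \<Phi> (fI_hat n A x \<cdot>\<^sub>m pauli n x)) (pstrings n)"
    by (rule quantum_channel_msum[OF qc finite_pstrings]) auto
  also have "\<dots> = msum (2^n) (\<lambda>x. fI_hat n A x \<cdot>\<^sub>m \<Phi> (pauli n x)) (pstrings n)"
    by (rule msum_cong) (simp add: quantum_channelD(3)[OF qc])
  finally have PA: "\<Phi> A = msum (2^n) (\<lambda>x. fI_hat n A x \<cdot>\<^sub>m \<Phi> (pauli n x)) (pstrings n)" .
  have car: "\<Phi> (pauli n x) \<in> carrier_mat (2^n) (2^n)" for x using quantum_channelD(1)[OF qc] by simp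
  have mt: "mtrace (pauli n z * \<Phi> A) = (\<Sum>x\<in>pstrings n. fI_hat n A x * mtrace (pauli n z * \<Phi> (pauli n x)))"
    unfolding PA by (subst mtrace_msum_right[of _ "2^n"]) (auto intro!: sum.cong simp: car mtrace_smult_right[OF pauli_carrier_mat car])
  have "fI_hat n (\<Phi> A) z = (\<Sum>x\<in>pstrings n. fI_hat n A x * mtrace (pauli n z * \<Phi> (pauli n x))) / 2^n"
    using mt by (simp add: fI_hat_def)
  also have "\<dots> = (\<Sum>x\<in>pstrings n. repM n \<Phi> z x * fI_hat n A x)"
    by (simp add: repM_def sum_divide_distrib mult_ac)
  also have "\<dots> = repM n \<Phi> z (replicate n 0) * fI_hat n A (replicate n 0)
      + (\<Sum>x\<in>nzstrings n. repM n \<Phi> z x * fI_hat n A x)"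
    unfolding pstrings_eq_insert_nzstrings by (rule sum.insert) (auto simp: finite_nzstrings nzstrings_def finite_pstrings)
  also have "repM n \<Phi> z (replicate n 0) = 0"
    unfolding repM_def pauli_replicate_0 un using mtrace_pauli[OF z] by simp
  finally show ?thesis by simp
qed

lemma mtrace_mult_traceless:
  assumes B: "B \<in> carrier_mat (2^n) (2^n)" and H: "H \<in> carrier_mat (2^n) (2^n)" and tH: "mtrace H = 0"
  shows "mtrace (B * H) = (\<Sum>z\<in>nzstrings n. fI_hat n B z * mtrace (pauli n z * H))"
proof -
  have "mtrace (B * H) = mtrace (msum (2^n) (\<lambda>z. fI_hat n B z \<cdot>\<^sub>m pauli n z) (pstrings n) * H)"
    using pauli_expansion[OF B] by simp
  also have "\<dots> = (\<Sum>z\<in>pstrings n. fI_hat n B z * mtrace (pauli n z * H))"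
    using H by (subst mtrace_msum_left[of _ "2^n"]) (auto simp: mtrace_smult_left)
  also have "\<dots> = fI_hat n B (replicate n 0) * mtrace (pauli n (replicate n 0) * H)
      + (\<Sum>z\<in>nzstrings n. fI_hat n B z * mtrace (pauli n z * H))"
    unfolding pstrings_eq_insert_nzstrings by (rule sum.insert) (auto simp: finite_nzstrings nzstrings_def finite_pstrings)
  also have "mtrace (pauli n (replicate n 0) * H) = 0" using H tH by (simp add: pauli_replicate_0)
  finally show ?thesis by simp
qed

definition pauli_transfer ::
    "nat \<Rightarrow> (complex mat \<Rightarrow> complex mat) \<Rightarrow> (nat list \<Rightarrow> complex) \<Rightarrow> nat list \<Rightarrow> complex" where
  "pauli_transfer n \<Phi> v = (\<lambda>z. \<Sum>x\<in>nzstrings n. repM n \<Phi> z x * v x)"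

definition circuit_transfer ::
    "nat \<Rightarrow> (complex mat \<Rightarrow> complex mat) list \<Rightarrow> (nat list \<Rightarrow> complex) \<Rightarrow> nat list \<Rightarrow> complex" where
  "circuit_transfer n cs v = fold (pauli_transfer n) cs v"

lemma apply_circuit_Nil[simp]: "apply_circuit [] A = A"
  by (simp add: apply_circuit_def)

lemma apply_circuit_Cons[simp]: "apply_circuit (\<Phi> # cs) A = apply_circuit cs (\<Phi> A)"
  by (simp add: apply_circuit_def)

lemma circuit_transfer_Nil[simp]: "circuit_transfer n [] v = v"
  by (simp add: circuit_transfer_def)

lemma circuit_transfer_Cons[simp]:
  "circuit_transfer n (\<Phi> # cs) v = circuit_transfer n cs (pauli_transfer n \<Phi> v)"
  by (simp add: circuit_transfer_def)

lemma apply_circuit_carrier_mat: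
  "(\<forall>\<Phi>\<in>set cs. unital_channel n \<Phi>) \<Longrightarrow> A \<in> carrier_mat (2^n) (2^n) \<Longrightarrow>
    apply_circuit cs A \<in> carrier_mat (2^n) (2^n)"
proof (induction cs arbitrary: A)
  case Nil then show ?case by simp
next
  case (Cons \<Phi> cs)
  have "\<Phi> A \<in> carrier_mat (2^n) (2^n)" using Cons.prems quantum_channelD(1) by (auto simp: unital_channel_def)
  thus ?case using Cons by simp
qed

lemma circuit_transfer_fI_hat:
  "(\<forall>\<Phi>\<in>set cs. unital_channel n \<Phi>) \<Longrightarrow> A \<in> carrier_mat (2^n) (2^n) \<Longrightarrow>
   (\<forall>z\<in>nzstrings n. v z = fI_hat n A z) \<Longrightarrow> z \<in> nzstrings n \<Longrightarrow>
   circuit_transfer n cs v z = fI_hat n (apply_circuit cs A) z"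
proof (induction cs arbitrary: A v)
  case Nil then show ?case by simp
next
  case (Cons \<Phi> cs)
  have u: "unital_channel n \<Phi>" using Cons.prems by simp
  have car: "\<Phi> A \<in> carrier_mat (2^n) (2^n)" using u Cons.prems quantum_channelD(1) by (auto simp: unital_channel_def)
  have "\<forall>z\<in>nzstrings n. pauli_transfer n \<Phi> v z = fI_hat n (\<Phi> A) z"
    using Cons.prems fI_hat_unital_channel[OF u] by (auto simp: pauli_transfer_def intro!: sum.cong)
  thus ?case using Cons.IH[OF _ car] Cons.prems by simp
qed

lemma pauli_transfer_sum:
  "pauli_transfer n \<Phi> (\<lambda>z. \<Sum>i<m. c i * v i z) = (\<lambda>z. \<Sum>i<m. c i * pauli_transfer n \<Phi> (v i) z)"
  by (auto simp: pauli_transfer_def sum_distrib_left sum.swap[of _ "nzstrings n"] mult_ac)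

lemma circuit_transfer_sum:
  "circuit_transfer n cs (\<lambda>z. \<Sum>i<m. c i * v i z) = (\<lambda>z. \<Sum>i<m. c i * circuit_transfer n cs (v i) z)"
proof (induction cs arbitrary: v)
  case Nil then show ?case by simp
next
  case (Cons \<Phi> cs)
  show ?case using Cons.IH[of "\<lambda>i. pauli_transfer n \<Phi> (v i)"] by (simp add: pauli_transfer_sum)
qed

section \<open>Norm estimates along a circuit\<close>

lemma card_pstrings: "card (pstrings n) = 4 ^ n"
proof -
  have "pstrings n = {xs. set xs \<subseteq> {0..<4} \<and> length xs = n}" by (auto simp: pstrings_def)
  thus ?thesis by (simp add: card_lists_length_eq)
qed

lemma card_nzstrings: "real (card (nzstrings n)) = 4 ^ n - 1"
proof -
  have "card (nzstrings n) = 4 ^ n - 1"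
    using card_pstrings replicate_0_in_pstrings finite_pstrings by (simp add: nzstrings_def card_Diff_singleton)
  moreover have "(1::nat) \<le> 4 ^ n" by simp
  ultimately show ?thesis by (simp add: of_nat_diff)
qed

lemma card_nzstrings_ge_1:
  assumes "n \<ge> 1" shows "real (card (nzstrings n)) \<ge> 1"
proof -
  have "(4::real) \<le> 4 ^ n" using assms by (simp add: self_le_power)
  thus ?thesis using card_nzstrings[of n] by simp
qed

lemma nzstrings_nonempty: "n \<ge> 1 \<Longrightarrow> nzstrings n \<noteq> {}"
  using card_nzstrings_ge_1 by force

lemma pstar_pos: "p \<ge> 1 \<Longrightarrow> pstar p > 0"
  by (simp add: pstar_def)

lemma lpnorm_nonneg: "lpnorm p S v \<ge> 0"
  by (simp add: lpnorm_def)

lemma group_norm_nonneg: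
  assumes "n \<ge> 1" shows "group_norm n p q M \<ge> 0"
proof (cases "q = \<infinity>")
  case True
  obtain z where z: "z \<in> nzstrings n" using nzstrings_nonempty[OF assms] by auto
  have "lpnorm p (nzstrings n) (M z) \<le> Max ((\<lambda>z. lpnorm p (nzstrings n) (M z)) ` nzstrings n)"
    using z finite_nzstrings by (intro Max_ge) auto
  then show ?thesis using True lpnorm_nonneg[of p "nzstrings n" "M z"]
    by (simp add: group_norm_def Let_def)
qed (simp add: group_norm_def Let_def)

lemma enorm_rows_eq_group_norm:
  assumes "n \<ge> 1" "q > 0"
  shows "enorm q (nzstrings n) (\<lambda>z. lpnorm p (nzstrings n) (M z))
    = real (card (nzstrings n)) powr recip_e q * group_norm n p q M"
proof (cases "q = \<infinity>")
  case True
  then show ?thesis using card_nzstrings_ge_1[OF assms(1)]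
    by (simp add: enorm_def group_norm_def Let_def recip_e_def)
next
  case False
  define q' where "q' = real_of_ereal q"
  have q': "q' > 0" using real_of_ereal_pos[OF assms(2) False] unfolding q'_def .
  define N where "N = real (card (nzstrings n))"
  have N: "N > 0" using card_nzstrings_ge_1[OF assms(1)] unfolding N_def by simp
  define T where "T = (\<Sum>z\<in>nzstrings n. lpnorm p (nzstrings n) (M z) powr q')"
  have T: "T \<ge> 0" unfolding T_def by (rule sum_nonneg) simp
  have "enorm q (nzstrings n) (\<lambda>z. lpnorm p (nzstrings n) (M z)) = T powr (1/q')"
    using False unfolding enorm_def lnorm_def T_def q'_def by simp
  also have "\<dots> = N powr (1/q') * (T / N) powr (1/q')"
    using powr_mult[of N "T / N" "1/q'"] N T by simp
  also have "(T / N) powr (1/q') = group_norm n p q M"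
    using False unfolding group_norm_def Let_def T_def q'_def N_def by simp
  finally show ?thesis using False unfolding N_def q'_def recip_e_def by simp
qed

lemma enorm_rows_le_group_norm:
  fixes M :: "nat list \<Rightarrow> nat list \<Rightarrow> complex"
  assumes n: "n \<ge> 1" and q: "q > 0" and r: "r > 0"
  defines "N \<equiv> real (card (nzstrings n))"
  shows "enorm r (nzstrings n) (\<lambda>z. lpnorm p (nzstrings n) (M z))
    \<le> N powr max (recip_e r) (recip_e q) * group_norm n p q M"
proof -
  let ?a = "\<lambda>z. lpnorm p (nzstrings n) (M z)"
  have S: "finite (nzstrings n)" "nzstrings n \<noteq> {}" using finite_nzstrings nzstrings_nonempty[OF n] by auto
  have a: "\<forall>z\<in>nzstrings n. ?a z \<ge> 0" by (simp add: lpnorm_nonneg)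
  have N: "N \<ge> 1" using card_nzstrings_ge_1[OF n] unfolding N_def .
  show ?thesis
  proof (cases "r \<le> q")
    case True
    have "enorm r (nzstrings n) ?a \<le> N powr (recip_e r - recip_e q) * enorm q (nzstrings n) ?a"
      unfolding N_def by (rule enorm_le_card_powr_enorm[OF S r True a])
    also have "\<dots> = N powr (recip_e r - recip_e q + recip_e q) * group_norm n p q M"
      unfolding enorm_rows_eq_group_norm[OF n q] N_def[symmetric] powr_add by simp
    also have "recip_e r - recip_e q + recip_e q = max (recip_e r) (recip_e q)"
      using recip_e_antimono[OF r True] by simp
    finally show ?thesis .
  next
    case False
    hence "q \<le> r" by simp
    have "enorm r (nzstrings n) ?a \<le> enorm q (nzstrings n) ?a"
      by (rule enorm_antimono[OF S q \<open>q \<le> r\<close> a])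
    also have "\<dots> = N powr recip_e q * group_norm n p q M"
      unfolding enorm_rows_eq_group_norm[OF n q] N_def ..
    also have "recip_e q = max (recip_e r) (recip_e q)"
      using recip_e_antimono[OF q \<open>q \<le> r\<close>] by simp
    finally show ?thesis .
  qed
qed

lemma lpnorm_e_pauli_transfer_le:
  assumes n: "n \<ge> 1" and p: "p \<ge> 1" and q: "q > 0"
  defines "N \<equiv> real (card (nzstrings n))"
  shows "lpnorm_e (pstar p) (nzstrings n) (pauli_transfer n \<Phi> v)
     \<le> N powr max (recip_e (pstar p)) (recip_e q) * group_norm n p q (repM n \<Phi>)
        * lpnorm_e (pstar p) (nzstrings n) v"
proof -
  define S where "S = nzstrings n"
  have S: "finite S" "S \<noteq> {}" using finite_nzstrings nzstrings_nonempty[OF n] unfolding S_def by auto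
  define a where "a z = lpnorm p S (repM n \<Phi> z)" for z
  define V where "V = lpnorm_e (pstar p) S v"
  have V: "V \<ge> 0"
    unfolding V_def lpnorm_e_eq_enorm by (rule enorm_nonneg[OF S pstar_pos[OF p]]) simp
  have row: "cmod (pauli_transfer n \<Phi> v z) \<le> a z * V" for z
    unfolding pauli_transfer_def a_def V_def S_def[symmetric] by (rule Holder_lpnorm_e[OF S p])
  have "lpnorm_e (pstar p) S (pauli_transfer n \<Phi> v) \<le> enorm (pstar p) S (\<lambda>z. a z * V)"
    unfolding lpnorm_e_eq_enorm using row V
    by (intro enorm_mono[OF S pstar_pos[OF p]]) (simp add: a_def lpnorm_nonneg)
  also have "\<dots> = enorm (pstar p) S a * V"
    using V by (intro enorm_mult_const[OF S pstar_pos[OF p]]) (simp_all add: a_def lpnorm_nonneg)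
  also have "\<dots> \<le> N powr max (recip_e (pstar p)) (recip_e q) * group_norm n p q (repM n \<Phi>) * V"
    using enorm_rows_le_group_norm[OF n q pstar_pos[OF p], of p "repM n \<Phi>"] V
    unfolding a_def S_def N_def by (intro mult_right_mono) auto
  finally show ?thesis unfolding S_def V_def .
qed

lemma mu_hat_Cons: "mu_hat n p q (\<Phi> # cs) = group_norm n p q (repM n \<Phi>) * mu_hat n p q cs"
  by (simp add: mu_hat_def)

lemma mu_hat_nonneg: "n \<ge> 1 \<Longrightarrow> mu_hat n p q cs \<ge> 0"
  by (induction cs) (auto simp: mu_hat_Cons group_norm_nonneg, simp add: mu_hat_def)

lemma lpnorm_e_circuit_transfer_le:
  assumes n: "n \<ge> 1" and p: "p \<ge> 1" and q: "q > 0"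
  defines "N \<equiv> real (card (nzstrings n))" and "E \<equiv> max (recip_e (pstar p)) (recip_e q)"
  shows "lpnorm_e (pstar p) (nzstrings n) (circuit_transfer n cs v)
     \<le> N powr (real (length cs) * E) * mu_hat n p q cs * lpnorm_e (pstar p) (nzstrings n) v"
proof (induction cs arbitrary: v)
  case Nil
  have "N > 0" using card_nzstrings_ge_1[OF n] unfolding N_def by simp
  then show ?case by (simp add: mu_hat_def)
next
  case (Cons \<Phi> cs)
  have N: "N > 0" using card_nzstrings_ge_1[OF n] unfolding N_def by simp
  have "lpnorm_e (pstar p) (nzstrings n) (circuit_transfer n (\<Phi> # cs) v)
      \<le> N powr (real (length cs) * E) * mu_hat n p q cs * lpnorm_e (pstar p) (nzstrings n) (pauli_transfer n \<Phi> v)"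
    using Cons.IH[of "pauli_transfer n \<Phi> v"] by simp
  also have "\<dots> \<le> N powr (real (length cs) * E) * mu_hat n p q cs *
      (N powr E * group_norm n p q (repM n \<Phi>) * lpnorm_e (pstar p) (nzstrings n) v)"
    using lpnorm_e_pauli_transfer_le[OF n p q, of \<Phi> v] mu_hat_nonneg[OF n] unfolding N_def E_def
    by (intro mult_left_mono) auto
  also have "\<dots> = N powr (real (length cs) * E + E) * (group_norm n p q (repM n \<Phi>) * mu_hat n p q cs)
      * lpnorm_e (pstar p) (nzstrings n) v"
    using N by (simp add: powr_add mult_ac)
  finally show ?case by (simp add: mu_hat_Cons distrib_right add.commute)
qed

section \<open>The completely depolarizing channel\<close>

text \<open>Its \<open>repM\<close> vanishes on non-identity strings, so its depth-\<open>l\<close> circuits lie in every class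
  \<open>circuits n l p q \<mu>\<close>; this nonemptiness matters because \<open>rademacher\<close> takes \<open>Sup\<close> on the
  reals, which is junk on the empty set.\<close>

definition depolarizing :: "nat \<Rightarrow> complex mat \<Rightarrow> complex mat" where
  "depolarizing n A = (mtrace A / 2^n) \<cdot>\<^sub>m 1\<^sub>m (2^n)"

definition quad_form :: "nat \<Rightarrow> complex mat \<Rightarrow> (nat \<Rightarrow> complex) \<Rightarrow> complex" where
  "quad_form d A v = (\<Sum>i<d. \<Sum>j<d. cnj (v i) * A $$ (i, j) * v j)"

lemma psd_iff_quad_form: "psd d A \<longleftrightarrow> hermitian d A \<and> (\<forall>v. 0 \<le> Re (quad_form d A v))"
  by (simp add: psd_def quad_form_def)

definition block_select :: "nat \<Rightarrow> (nat \<Rightarrow> complex) \<Rightarrow> nat \<Rightarrow> nat \<Rightarrow> nat \<Rightarrow> complex" where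
  "block_select D v s r i = (if i mod D = r then v (i div D * D + s) else 0)"

lemma sum_lessThan_mult:
  "(\<Sum>i<k * D. F i) = (\<Sum>a<k. \<Sum>t<D. F (a * D + t) :: 'a::comm_monoid_add)" for k D :: nat
proof (induction k)
  case (Suc k)
  have "(\<Sum>i<Suc k * D. F i) = (\<Sum>i<k * D + D. F i)" by (simp add: add.commute)
  also have "\<dots> = (\<Sum>i<k * D. F i) + (\<Sum>t<D. F (k * D + t))" by (rule sum_lessThan_add)
  finally show ?case using Suc by simp
qed simp

lemma block_index_less: "a < k \<Longrightarrow> t < D \<Longrightarrow> a * D + t < k * (D::nat)"
proof -
  assume "a < k" "t < D"
  hence "a * D + t < Suc a * D" by simp
  also have "\<dots> \<le> k * D" using \<open>a < k\<close> by (intro mult_right_mono) auto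
  finally show ?thesis .
qed

lemma mtrace_add: "A \<in> carrier_mat d d \<Longrightarrow> B \<in> carrier_mat d d \<Longrightarrow> mtrace (A + B) = mtrace A + mtrace B"
  by (simp add: mtrace_def sum.distrib)

lemma mtrace_smult: "A \<in> carrier_mat d d \<Longrightarrow> mtrace (c \<cdot>\<^sub>m A) = c * mtrace A"
  by (simp add: mtrace_def sum_distrib_left)

lemma mtrace_one: "mtrace (1\<^sub>m d) = of_nat d"
  by (simp add: mtrace_def)

lemma ampl_depolarizing_index:
  assumes "i < k * 2^n" "j < k * 2^n"
  shows "ampl (2^n) k (depolarizing n) X $$ (i,j) =
     (if i mod 2^n = j mod 2^n
      then (\<Sum>r<2^n. X $$ ((i div 2^n) * 2^n + r, (j div 2^n) * 2^n + r)) / 2^n else 0)"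
  using assms by (simp add: ampl_def depolarizing_def mtrace_def block_def)

lemma ampl_depolarizing_block_index:
  assumes "a < k" "s < 2^n" "b < k" "t < 2^n"
  shows "ampl (2^n) k (depolarizing n) X $$ (a * 2^n + s, b * 2^n + t) =
     (if s = t then (\<Sum>r<2^n. X $$ (a * 2^n + r, b * 2^n + r)) / 2^n else 0)"
  using assms by (simp add: ampl_depolarizing_index block_index_less)

lemma hermitian_ampl_depolarizing:
  assumes "hermitian (k * 2^n) X"
  shows "hermitian (k * 2^n) (ampl (2^n) k (depolarizing n) X)"
proof -
  define D :: nat where "D = 2^n"
  define Y where "Y = ampl D k (depolarizing n) X"
  have X: "X $$ (i, j) = cnj (X $$ (j, i))" if "i < k * D" "j < k * D" for i j
    using assms that unfolding hermitian_def D_def by blast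
  have Y: "Y \<in> carrier_mat (k * D) (k * D)" unfolding Y_def by (simp add: ampl_def)
  have "Y $$ (i,j) = cnj (Y $$ (j,i))" if "i < k * D" "j < k * D" for i j
  proof -
    have ik: "i div D < k" "j div D < k" using that by (auto simp: less_mult_imp_div_less)
    have l: "(i div D) * D + r < k * D" "(j div D) * D + r < k * D" if "r < D" for r
      using block_index_less[OF ik(1) that] block_index_less[OF ik(2) that] by auto
    have "cnj (\<Sum>r<D. X $$ ((j div D) * D + r, (i div D) * D + r))
        = (\<Sum>r<D. X $$ ((i div D) * D + r, (j div D) * D + r))"
      unfolding cnj_sum by (intro sum.cong refl) (metis X l complex_cnj_cnj lessThan_iff)
    moreover have "Y $$ (i,j) = (if i mod D = j mod D
        then (\<Sum>r<D. X $$ ((i div D) * D + r, (j div D) * D + r)) / 2^n else 0)"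
      using ampl_depolarizing_index[of i k n j X] that unfolding Y_def D_def by simp
    moreover have "Y $$ (j,i) = (if j mod D = i mod D
        then (\<Sum>r<D. X $$ ((j div D) * D + r, (i div D) * D + r)) / 2^n else 0)"
      using ampl_depolarizing_index[of j k n i X] that unfolding Y_def D_def by simp
    ultimately show ?thesis by simp
  qed
  then show ?thesis using Y unfolding hermitian_def Y_def D_def by blast
qed

lemma quad_form_block_select:
  assumes "r < D"
  shows "quad_form (k * D) X (block_select D v s r)
    = (\<Sum>a<k. \<Sum>b<k. cnj (v (a*D+s)) * X $$ (a*D+r, b*D+r) * v (b*D+s))"
proof -
  have "quad_form (k * D) X (block_select D v s r)
     = (\<Sum>a<k. \<Sum>s'<D. \<Sum>b<k. \<Sum>t<D. if t = r then (if s' = r then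
          cnj (v (a*D+s)) * X $$ (a*D+r, b*D+r) * v (b*D+s) else 0) else 0)"
    unfolding quad_form_def sum_lessThan_mult by (intro sum.cong refl) (auto simp: block_select_def)
  also have "\<dots> = (\<Sum>a<k. \<Sum>s'<D. \<Sum>b<k. if s' = r then cnj (v (a*D+s)) * X $$ (a*D+r, b*D+r) * v (b*D+s) else 0)"
    using assms by (intro sum.cong refl) (simp add: sum.delta)
  also have "\<dots> = (\<Sum>a<k. \<Sum>s'<D. if s' = r then (\<Sum>b<k. cnj (v (a*D+s)) * X $$ (a*D+r, b*D+r) * v (b*D+s)) else 0)"
    by (intro sum.cong refl) simp
  also have "\<dots> = (\<Sum>a<k. \<Sum>b<k. cnj (v (a*D+s)) * X $$ (a*D+r, b*D+r) * v (b*D+s))"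
    using assms by (intro sum.cong[OF refl]) (simp add: sum.delta)
  finally show ?thesis .
qed

lemma quad_form_ampl_depolarizing:
  "quad_form (k * 2^n) (ampl (2^n) k (depolarizing n) X) v
    = (\<Sum>s<2^n. \<Sum>r<2^n. quad_form (k * 2^n) X (block_select (2^n) v s r)) / 2^n"
proof -
  define D :: nat where "D = 2^n"
  define T where "T a b = (\<Sum>r<D. X $$ (a * D + r, b * D + r))" for a b
  have "quad_form (k * D) (ampl D k (depolarizing n) X) v
      = (\<Sum>a<k. \<Sum>s<D. \<Sum>b<k. \<Sum>t<D. if t = s then cnj (v (a*D+s)) * (T a b / 2^n) * v (b*D+s) else 0)"
    unfolding quad_form_def sum_lessThan_mult
    by (intro sum.cong refl) (auto simp: ampl_depolarizing_block_index T_def D_def)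
  also have "\<dots> = (\<Sum>a<k. \<Sum>s<D. \<Sum>b<k. cnj (v (a*D+s)) * (T a b / 2^n) * v (b*D+s))"
    by (intro sum.cong refl) (simp add: sum.delta)
  also have "\<dots> = (\<Sum>a<k. \<Sum>s<D. \<Sum>b<k. \<Sum>r<D. cnj (v (a*D+s)) * X $$ (a*D+r, b*D+r) * v (b*D+s) / 2^n)"
    unfolding T_def by (simp add: sum_distrib_left sum_distrib_right sum_divide_distrib)
  also have "\<dots> = (\<Sum>s<D. \<Sum>a<k. \<Sum>r<D. \<Sum>b<k. cnj (v (a*D+s)) * X $$ (a*D+r, b*D+r) * v (b*D+s) / 2^n)"
    by (subst sum.swap) (intro sum.cong refl sum.swap)
  also have "\<dots> = (\<Sum>s<D. \<Sum>r<D. \<Sum>a<k. \<Sum>b<k. cnj (v (a*D+s)) * X $$ (a*D+r, b*D+r) * v (b*D+s) / 2^n)"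
    by (intro sum.cong refl sum.swap)
  also have "\<dots> = (\<Sum>s<D. \<Sum>r<D. quad_form (k * D) X (block_select D v s r)) / 2^n"
    by (simp add: quad_form_block_select sum_divide_distrib)
  finally show ?thesis unfolding D_def by simp
qed

lemma psd_ampl_depolarizing:
  assumes "psd (k * 2^n) X"
  shows "psd (k * 2^n) (ampl (2^n) k (depolarizing n) X)"
  unfolding psd_iff_quad_form
proof (intro conjI allI)
  show "hermitian (k * 2^n) (ampl (2^n) k (depolarizing n) X)"
    using assms hermitian_ampl_depolarizing by (simp add: psd_def)
  fix v
  have "\<forall>w. 0 \<le> Re (quad_form (k * 2^n) X w)" using assms by (simp add: psd_iff_quad_form)
  then show "0 \<le> Re (quad_form (k * 2^n) (ampl (2^n) k (depolarizing n) X) v)"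
    unfolding quad_form_ampl_depolarizing by (simp add: Re_divide_numeral Re_sum sum_nonneg)
qed

lemma unital_channel_depolarizing: "unital_channel n (depolarizing n)"
proof -
  have add: "depolarizing n (A + B) = depolarizing n A + depolarizing n B"
    if "A \<in> carrier_mat (2^n) (2^n)" "B \<in> carrier_mat (2^n) (2^n)" for A B
    by (rule eq_matI) (use that in \<open>auto simp: depolarizing_def mtrace_add[OF that] add_divide_distrib\<close>)
  have smult: "depolarizing n (c \<cdot>\<^sub>m A) = c \<cdot>\<^sub>m depolarizing n A" if "A \<in> carrier_mat (2^n) (2^n)" for A c
    by (rule eq_matI) (use that in \<open>auto simp: depolarizing_def mtrace_smult[OF that]\<close>)
  have trace: "mtrace (depolarizing n A) = mtrace A" for A
    unfolding depolarizing_def by (subst mtrace_smult[of _ "2^n"]) (auto simp: mtrace_one)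
  have unit: "depolarizing n (1\<^sub>m (2^n)) = 1\<^sub>m (2^n)"
    unfolding depolarizing_def mtrace_one by (rule eq_matI) auto
  show ?thesis unfolding unital_channel_def quantum_channel_def Let_def
    using add smult trace unit psd_ampl_depolarizing by (auto simp: depolarizing_def)
qed

lemma group_norm_depolarizing:
  assumes "n \<ge> 1" shows "group_norm n p q (repM n (depolarizing n)) = 0"
proof -
  have "repM n (depolarizing n) z x = 0" if "x \<in> nzstrings n" for z x
  proof -
    have "depolarizing n (pauli n x) = 0\<^sub>m (2^n) (2^n)"
      unfolding depolarizing_def using mtrace_pauli[OF that] by (intro eq_matI) auto
    then show ?thesis unfolding repM_def by (simp add: mtrace_def)
  qed
  then have "lpnorm p (nzstrings n) (repM n (depolarizing n) z) = 0" for z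
    unfolding lpnorm_def by simp
  moreover have "(\<lambda>z. 0::real) ` nzstrings n = {0}" using nzstrings_nonempty[OF assms] by auto
  ultimately show ?thesis unfolding group_norm_def Let_def by simp
qed

lemma depolarizing_circuit_in_circuits:
  assumes "n \<ge> 1" "l \<ge> 1" "\<mu> > 0"
  shows "replicate l (depolarizing n) \<in> circuits n l p q \<mu>"
  using assms unital_channel_depolarizing
  by (simp add: circuits_def mu_hat_def group_norm_depolarizing power_0_left)

section \<open>Rademacher complexity of the circuit class\<close>

lemma pure_state_carrier_mat: "pure_state n R \<Longrightarrow> R \<in> carrier_mat (2^n) (2^n)"
  by (auto simp: pure_state_def)

lemma f_circ_eq_circuit_transfer:
  assumes cs: "\<forall>\<Phi>\<in>set cs. unital_channel n \<Phi>" and H: "H \<in> carrier_mat (2^n) (2^n)" "mtrace H = 0"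
    and \<rho>x: "\<rho> x \<in> carrier_mat (2^n) (2^n)"
  shows "f_circ \<rho> H cs x
    = Re (\<Sum>z\<in>nzstrings n. mtrace (pauli n z * H) * circuit_transfer n cs (fI_hat n (\<rho> x)) z)"
proof -
  have "f_circ \<rho> H cs x = Re (\<Sum>z\<in>nzstrings n. fI_hat n (apply_circuit cs (\<rho> x)) z * mtrace (pauli n z * H))"
    unfolding f_circ_def mtrace_mult_traceless[OF apply_circuit_carrier_mat[OF cs \<rho>x] H] ..
  also have "\<dots> = Re (\<Sum>z\<in>nzstrings n. mtrace (pauli n z * H) * circuit_transfer n cs (fI_hat n (\<rho> x)) z)"
    using circuit_transfer_fI_hat[OF cs \<rho>x] by (intro arg_cong[where f=Re] sum.cong refl) (auto simp: mult.commute)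
  finally show ?thesis .
qed

lemma sign_sum_f_circ_le:
  assumes n: "n \<ge> 1" and p: "p \<ge> 1" and q: "q > 0"
    and H: "hermitian (2 ^ n) H" and tH: "mtrace H = 0"
    and \<rho>: "\<forall>x. pure_state n (\<rho> x)" and cs: "cs \<in> circuits n l p q \<mu>"
  shows "\<bar>\<Sum>i<m. e ! i * f_circ \<rho> H cs (xs ! i)\<bar>
    \<le> \<mu> * real (card (nzstrings n)) powr (real l * max (recip_e (pstar p)) (recip_e q))
       * lpnorm p (nzstrings n) (\<lambda>z. mtrace (pauli n z * H))
       * lpnorm_e (pstar p) (nzstrings n) (\<lambda>z. \<Sum>i<m. of_real (e ! i) * fI_hat n (\<rho> (xs ! i)) z)"
proof -
  define S where "S = nzstrings n"
  have S: "finite S" "S \<noteq> {}" using finite_nzstrings nzstrings_nonempty[OF n] unfolding S_def by auto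
  define \<alpha> where "\<alpha> z = mtrace (pauli n z * H)" for z
  define N where "N = real (card S) powr (real l * max (recip_e (pstar p)) (recip_e q))"
  define u where "u z = (\<Sum>i<m. of_real (e ! i) * fI_hat n (\<rho> (xs ! i)) z)" for z
  have csl: "length cs = l" and csu: "\<forall>\<Phi>\<in>set cs. unital_channel n \<Phi>" and csm: "mu_hat n p q cs \<le> \<mu>"
    using cs by (auto simp: circuits_def)
  have Hc: "H \<in> carrier_mat (2^n) (2^n)" using H by (simp add: hermitian_def)
  have f: "f_circ \<rho> H cs x = Re (\<Sum>z\<in>S. \<alpha> z * circuit_transfer n cs (fI_hat n (\<rho> x)) z)" for x
    unfolding S_def \<alpha>_def using \<rho> pure_state_carrier_mat by (intro f_circ_eq_circuit_transfer[OF csu Hc tH]) blast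
  have "(\<Sum>i<m. e ! i * f_circ \<rho> H cs (xs ! i))
      = Re (\<Sum>i<m. of_real (e ! i) * (\<Sum>z\<in>S. \<alpha> z * circuit_transfer n cs (fI_hat n (\<rho> (xs ! i))) z))"
    unfolding f Re_sum by simp
  also have "\<dots> = Re (\<Sum>z\<in>S. \<alpha> z * (\<Sum>i<m. of_real (e ! i) * circuit_transfer n cs (fI_hat n (\<rho> (xs ! i))) z))"
    by (simp add: sum_distrib_left sum.swap[of _ S] mult_ac)
  also have "(\<lambda>z. \<Sum>i<m. of_real (e ! i) * circuit_transfer n cs (fI_hat n (\<rho> (xs ! i))) z) = circuit_transfer n cs u"
    unfolding u_def by (rule circuit_transfer_sum[symmetric])
  finally have "\<bar>\<Sum>i<m. e ! i * f_circ \<rho> H cs (xs ! i)\<bar> \<le> cmod (\<Sum>z\<in>S. \<alpha> z * circuit_transfer n cs u z)"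
    by (simp only: abs_Re_le_cmod)
  also have "\<dots> \<le> lpnorm p S \<alpha> * lpnorm_e (pstar p) S (circuit_transfer n cs u)"
    by (rule Holder_lpnorm_e[OF S p])
  also have "\<dots> \<le> lpnorm p S \<alpha> * (N * \<mu> * lpnorm_e (pstar p) S u)"
  proof (rule mult_left_mono[OF _ lpnorm_nonneg])
    have "lpnorm_e (pstar p) S (circuit_transfer n cs u) \<le> N * mu_hat n p q cs * lpnorm_e (pstar p) S u"
      using lpnorm_e_circuit_transfer_le[OF n p q, of cs u] csl unfolding S_def N_def by simp
    also have "\<dots> \<le> N * \<mu> * lpnorm_e (pstar p) S u"
      using csm enorm_nonneg[OF S pstar_pos[OF p]] unfolding N_def lpnorm_e_eq_enorm
      by (intro mult_right_mono mult_left_mono) auto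
    finally show "lpnorm_e (pstar p) S (circuit_transfer n cs u) \<le> N * \<mu> * lpnorm_e (pstar p) S u" .
  qed
  finally show ?thesis unfolding S_def \<alpha>_def u_def N_def by (simp add: mult_ac)
qed

lemma pure_state_hermitian: "pure_state n R \<Longrightarrow> hermitian (2^n) R"
proof -
  assume "pure_state n R"
  then obtain v where R: "R = Matrix.mat (2^n) (2^n) (\<lambda>(i, j). v i * cnj (v j))" unfolding pure_state_def by blast
  show ?thesis unfolding hermitian_def R by simp
qed

lemma Im_fI_hat:
  assumes "hermitian (2^n) R"
  shows "Im (fI_hat n R z) = 0"
proof -
  have R: "R \<in> carrier_mat (2^n) (2^n)" using assms by (simp add: hermitian_def)
  have h: "cnj (R $$ (j,i)) = R $$ (i,j)" if "i < 2^n" "j < 2^n" for i j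
    using assms that unfolding hermitian_def by (metis complex_cnj_cnj)
  define t where "t = mtrace (pauli n z * R)"
  have t: "t = (\<Sum>i<2^n. \<Sum>j<2^n. pauli n z $$ (i,j) * R $$ (j,i))"
    unfolding t_def by (rule mtrace_mult[OF pauli_carrier_mat R])
  have "cnj t = (\<Sum>i<2^n. \<Sum>j<2^n. cnj (pauli n z $$ (i,j)) * cnj (R $$ (j,i)))"
    unfolding t by (simp only: cnj_sum complex_cnj_mult)
  also have "\<dots> = (\<Sum>i<2^n. \<Sum>j<2^n. pauli n z $$ (j,i) * R $$ (i,j))"
    by (intro sum.cong refl) (simp add: cnj_pauli h)
  also have "\<dots> = t" unfolding t by (subst sum.swap) simp
  finally have "cnj t = t" .
  hence "Im t = 0" by (metis cnj.simps(2) neg_equal_zero)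
  thus ?thesis unfolding fI_hat_def t_def[symmetric] by simp
qed

definition sample_coeff :: "nat \<Rightarrow> ('x \<Rightarrow> complex mat) \<Rightarrow> 'x list \<Rightarrow> nat \<Rightarrow> nat list \<Rightarrow> real" where
  "sample_coeff n \<rho> xs i z = Re (fI_hat n (\<rho> (xs ! i)) z)"

lemma fI_hat_eq_sample_coeff:
  "\<forall>x. pure_state n (\<rho> x) \<Longrightarrow> fI_hat n (\<rho> (xs ! i)) z = of_real (sample_coeff n \<rho> xs i z)"
  using Im_fI_hat[OF pure_state_hermitian] by (simp add: sample_coeff_def complex_eq_iff)

lemma rademacher_fclass_le:
  assumes n: "n \<ge> 1" and p: "p \<ge> 1" and q: "q > 0" and l: "l \<ge> 1" and \<mu>: "\<mu> > 0"
    and H: "hermitian (2 ^ n) H" and tH: "mtrace H = 0"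
    and \<rho>: "\<forall>x. pure_state n (\<rho> x)" and m: "length xs \<ge> 1"
  defines "C \<equiv> \<mu> * real (card (nzstrings n)) powr (real l * max (recip_e (pstar p)) (recip_e q))
       * lpnorm p (nzstrings n) (\<lambda>z. mtrace (pauli n z * H))"
  shows "rademacher xs (fclass n l p q \<mu> \<rho> H) \<le> C / (real (length xs) * 2 ^ length xs) *
     (\<Sum>e\<in>signs (length xs). enorm (pstar p) (nzstrings n)
        (\<lambda>z. \<bar>\<Sum>i<length xs. e ! i * sample_coeff n \<rho> xs i z\<bar>))"
proof -
  define m where "m = length xs"
  define Y where "Y e = enorm (pstar p) (nzstrings n) (\<lambda>z. \<bar>\<Sum>i<m. e ! i * sample_coeff n \<rho> xs i z\<bar>)" for e
  have "Sup {\<bar>\<Sum>i<m. e ! i * g (xs ! i)\<bar> |g. g \<in> fclass n l p q \<mu> \<rho> H} \<le> C * Y e" for e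
  proof (rule cSup_least)
    show "{\<bar>\<Sum>i<m. e ! i * g (xs ! i)\<bar> |g. g \<in> fclass n l p q \<mu> \<rho> H} \<noteq> {}"
      using depolarizing_circuit_in_circuits[OF n l \<mu>] unfolding fclass_def by blast
    fix x assume "x \<in> {\<bar>\<Sum>i<m. e ! i * g (xs ! i)\<bar> |g. g \<in> fclass n l p q \<mu> \<rho> H}"
    then obtain cs where cs: "cs \<in> circuits n l p q \<mu>" and x: "x = \<bar>\<Sum>i<m. e ! i * f_circ \<rho> H cs (xs ! i)\<bar>"
      unfolding fclass_def by blast
    have "x \<le> C * lpnorm_e (pstar p) (nzstrings n) (\<lambda>z. \<Sum>i<m. of_real (e ! i) * fI_hat n (\<rho> (xs ! i)) z)"
      unfolding x C_def by (rule sign_sum_f_circ_le[OF n p q H tH \<rho> cs])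
    also have "lpnorm_e (pstar p) (nzstrings n) (\<lambda>z. \<Sum>i<m. of_real (e ! i) * fI_hat n (\<rho> (xs ! i)) z) = Y e"
      unfolding Y_def lpnorm_e_eq_enorm fI_hat_eq_sample_coeff[OF \<rho>] by (simp flip: of_real_mult of_real_sum)
    finally show "x \<le> C * Y e" .
  qed
  then have "rademacher xs (fclass n l p q \<mu> \<rho> H) \<le> (\<Sum>e\<in>signs m. 1 / real m * (C * Y e)) / 2 ^ m"
    unfolding rademacher_def m_def[symmetric] Let_def
    using m unfolding m_def by (intro divide_right_mono sum_mono mult_left_mono) auto
  also have "\<dots> = C / (real m * 2 ^ m) * (\<Sum>e\<in>signs m. Y e)"
  proof -
    have "(\<Sum>e\<in>signs m. 1 / real m * (C * Y e)) = C / real m * (\<Sum>e\<in>signs m. Y e)"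
      by (simp add: sum_distrib_left)
    thus ?thesis by simp
  qed
  finally show ?thesis unfolding m_def Y_def .
qed

lemma K_hat_eq:
  assumes "\<forall>x. pure_state n (\<rho> x)"
  shows "K_hat n p \<rho> xs H = lpnorm p (nzstrings n) (\<lambda>z. mtrace (pauli n z * H)) *
    Max {enorm (pstar p) (nzstrings n) (\<lambda>z. \<bar>sample_coeff n \<rho> xs i z\<bar>) | i. i < length xs}"
  unfolding K_hat_def lpnorm_e_eq_enorm fI_hat_eq_sample_coeff[OF assms] by simp

lemma rademacher_fclass_le_K_hat:
  assumes n: "n \<ge> 1" and p: "p \<ge> 1" and q: "q > 0" and l: "l \<ge> 1" and \<mu>: "\<mu> > 0"
    and H: "hermitian (2 ^ n) H" and tH: "mtrace H = 0"
    and \<rho>: "\<forall>x. pure_state n (\<rho> x)" and m: "length xs \<ge> 1"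
    and sign_bound: "\<And>B. \<forall>i<length xs. enorm (pstar p) (nzstrings n) (\<lambda>z. \<bar>sample_coeff n \<rho> xs i z\<bar>) \<le> B \<Longrightarrow>
      B \<ge> 0 \<Longrightarrow> (\<Sum>e\<in>signs (length xs). enorm (pstar p) (nzstrings n)
        (\<lambda>z. \<bar>\<Sum>i<length xs. e ! i * sample_coeff n \<rho> xs i z\<bar>)) \<le> 2 ^ length xs * real (length xs) * \<beta> * B"
  shows "rademacher xs (fclass n l p q \<mu> \<rho> H)
    \<le> \<mu> * (4 ^ n - 1) powr (real l * max (recip_e (pstar p)) (recip_e q)) * \<beta> * K_hat n p \<rho> xs H"
proof -
  define B where "B = Max {enorm (pstar p) (nzstrings n) (\<lambda>z. \<bar>sample_coeff n \<rho> xs i z\<bar>) | i. i < length xs}"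
  define C where "C = \<mu> * (4 ^ n - 1) powr (real l * max (recip_e (pstar p)) (recip_e q))
    * lpnorm p (nzstrings n) (\<lambda>z. mtrace (pauli n z * H))"
  have wB: "\<forall>i<length xs. enorm (pstar p) (nzstrings n) (\<lambda>z. \<bar>sample_coeff n \<rho> xs i z\<bar>) \<le> B"
    unfolding B_def by (auto intro: Max_ge)
  have "enorm (pstar p) (nzstrings n) (\<lambda>z. \<bar>sample_coeff n \<rho> xs 0 z\<bar>) \<ge> 0"
    using finite_nzstrings nzstrings_nonempty[OF n] pstar_pos[OF p] by (intro enorm_nonneg) auto
  then have "B \<ge> 0" using wB m by force
  have "C / (real (length xs) * 2 ^ length xs) \<ge> 0" using \<mu> unfolding C_def by (simp add: lpnorm_nonneg)
  from mult_left_mono[OF sign_bound[OF wB \<open>B \<ge> 0\<close>] this]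
  have "rademacher xs (fclass n l p q \<mu> \<rho> H)
      \<le> C / (real (length xs) * 2 ^ length xs) * (2 ^ length xs * real (length xs) * \<beta> * B)"
    using rademacher_fclass_le[OF n p q l \<mu> H tH \<rho> m] unfolding C_def card_nzstrings by linarith
  also have "\<dots> = C * \<beta> * B"
  proof -
    define L where "L = real (length xs) * 2 ^ length xs"
    have L: "L > 0" using m unfolding L_def by (simp add: Suc_le_eq)
    have eq: "2 ^ length xs * real (length xs) * \<beta> * B = L * (\<beta> * B)"
      unfolding L_def by (simp add: mult_ac)
    show ?thesis unfolding L_def[symmetric] eq using L by simp
  qed
  finally show ?thesis unfolding K_hat_eq[OF \<rho>] C_def B_def by (simp add: mult_ac)
qed

lemma card_nzstrings_powr_le_sqrt_2:
  assumes n: "n \<ge> 1"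
  shows "real (card (nzstrings n)) powr (1 / real (4 * n)) \<le> sqrt 2"
proof -
  have "real (card (nzstrings n)) powr (1 / real (4 * n)) \<le> (4 ^ n) powr (1 / real (4 * n))"
    using card_nzstrings[of n] card_nzstrings_ge_1[OF n] by (intro powr_mono2) auto
  also have "(4 ^ n :: real) = 4 powr (real n)" by (simp add: powr_realpow)
  also have "(4 powr (real n)) powr (1 / real (4 * n)) = (4::real) powr (1/4)"
    using n by (simp add: powr_powr)
  also have "(4::real) powr (1/4) = sqrt 2"
    using powr_powr[of "2::real" 2 "1/4"] by (simp add: powr_half_sqrt)
  finally show ?thesis .
qed

text \<open>Beyond the exponent \<open>8 n\<close> one compares with the exponent \<open>4 n\<close>, which costs only the factor
  \<open>card (nzstrings n) powr (1 / (4 n)) \<le> sqrt 2\<close>.\<close>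

lemma sum_signs_enorm_le_min:
  fixes w :: "nat \<Rightarrow> nat list \<Rightarrow> real"
  assumes n: "n \<ge> 1" and m: "m \<ge> 1" and r: "r \<ge> 2"
    and wB: "\<forall>i<m. enorm r (nzstrings n) (\<lambda>z. \<bar>w i z\<bar>) \<le> B"
  shows "(\<Sum>e\<in>signs m. enorm r (nzstrings n) (\<lambda>z. \<bar>\<Sum>i<m. e ! i * w i z\<bar>))
      \<le> 2 ^ m * sqrt (real_of_ereal (min r (8 * real n))) * sqrt m * B"
proof -
  define S where "S = nzstrings n"
  have S: "finite S" "S \<noteq> {}" using finite_nzstrings nzstrings_nonempty[OF n] unfolding S_def by auto
  have r0: "r > 0" using order_less_le_trans[of 0 2 r] r by simp
  show ?thesis
  proof (cases "r \<le> 8 * real n")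
    case True
    then obtain r' where r': "r = ereal r'" using r by (cases r) auto
    from sum_signs_lnorm_le_ge_2[of S r' m w B] show ?thesis
      using S True r m wB r' unfolding S_def by (simp add: enorm_def min_def)
  next
    case False
    define s where "s = real (4 * n)"
    have "ereal s \<le> ereal (8 * real n)" unfolding s_def by simp
    with False have "ereal s \<le> r" by (meson linear order_trans)
    moreover have "s \<ge> 2" using n unfolding s_def by simp
    ultimately have s: "s \<ge> 2" "ereal s \<le> r" by auto
    define N where "N = real (card S)"
    have "B \<ge> 0"
      using wB[rule_format, of 0] m enorm_nonneg[OF S r0, of "\<lambda>z. \<bar>w 0 z\<bar>"] unfolding S_def by simp
    have wB': "lnorm s S (\<lambda>z. \<bar>w i z\<bar>) \<le> N powr (1/s) * B" if "i < m" for i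
    proof -
      have "lnorm s S (\<lambda>z. \<bar>w i z\<bar>) \<le> N powr (1/s) * enorm r S (\<lambda>z. \<bar>w i z\<bar>)"
        unfolding N_def using s by (intro lnorm_le_card_powr_enorm[OF S]) auto
      also have "\<dots> \<le> N powr (1/s) * B"
        using wB that unfolding S_def by (intro mult_left_mono) auto
      finally show ?thesis .
    qed
    have "(\<Sum>e\<in>signs m. enorm r S (\<lambda>z. \<bar>\<Sum>i<m. e ! i * w i z\<bar>))
        \<le> (\<Sum>e\<in>signs m. lnorm s S (\<lambda>z. \<bar>\<Sum>i<m. e ! i * w i z\<bar>))"
      using enorm_antimono[OF S _ s(2)] s by (intro sum_mono) (simp add: enorm_def)
    also have "\<dots> \<le> 2 ^ m * sqrt s * sqrt m * (N powr (1/s) * B)"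
      using wB' by (intro sum_signs_lnorm_le_ge_2[OF S(1) s(1) m]) auto
    also have "\<dots> = 2 ^ m * sqrt m * B * (sqrt s * N powr (1/s))" by (simp add: mult_ac)
    also have "\<dots> \<le> 2 ^ m * sqrt m * B * (sqrt s * sqrt 2)"
      using card_nzstrings_powr_le_sqrt_2[OF n] \<open>B \<ge> 0\<close> unfolding N_def S_def s_def
      by (intro mult_left_mono) auto
    also have "sqrt s * sqrt 2 = sqrt (real_of_ereal (min r (8 * real n)))"
      using False unfolding s_def by (simp add: min_def flip: real_sqrt_mult)
    finally show ?thesis unfolding S_def by (simp add: mult_ac)
  qed
qed

lemma sum_signs_enorm_le_gt_2:
  fixes w :: "nat \<Rightarrow> 'i \<Rightarrow> real"
  assumes S: "finite S" and p: "p > 2" and m: "m \<ge> 1"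
    and wB: "\<forall>i<m. enorm (pstar p) S (\<lambda>z. \<bar>w i z\<bar>) \<le> B"
  shows "(\<Sum>e\<in>signs m. enorm (pstar p) S (\<lambda>z. \<bar>\<Sum>i<m. e ! i * w i z\<bar>))
    \<le> 2 ^ m * real m powr (1 - 1/p) * B"
proof -
  define r where "r = p / (p - 1)"
  have r: "pstar p = ereal r" "1 \<le> r" "r \<le> 2" "1/r = 1 - 1/p"
    using p unfolding r_def pstar_def by (auto simp: field_simps)
  from sum_signs_lnorm_le_le_2[OF S r(2,3) m, of w B] show ?thesis
    using wB r by (simp add: enorm_def)
qed

lemma pstar_ge_2: "1 \<le> p \<Longrightarrow> p \<le> 2 \<Longrightarrow> pstar p \<ge> 2"
  by (simp add: pstar_def field_simps)

lemma pstar_ge_1: "1 < p \<Longrightarrow> real_of_ereal (pstar p) \<ge> 1"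
  by (simp add: pstar_def field_simps)

theorem mainTheorem6:
  fixes n l :: nat and \<mu> p :: real and q :: ereal
    and H :: "complex mat" and \<rho> :: "'x \<Rightarrow> complex mat" and xs :: "'x list"
  assumes "l \<ge> 1" and "n \<ge> 1" and "\<mu> > 0" and "1 \<le> p" and "0 < q"
    and "hermitian (2 ^ n) H" and "mtrace H = 0"
    and "\<forall>x. pure_state n (\<rho> x)"
    and "length xs \<ge> 1"
  defines "N \<equiv> (4::real) ^ n - 1"
    and "m \<equiv> real (length xs)"
    and "E \<equiv> real l * max (recip_e (pstar p)) (recip_e q)"
  shows "(p \<le> 2 \<longrightarrow>
           rademacher xs (fclass n l p q \<mu> \<rho> H)
             \<le> \<mu> * N powr E * (sqrt (real_of_ereal (min (pstar p) (ereal (8 * real n)))) / sqrt m)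
               * K_hat n p \<rho> xs H)
       \<and> (2 < p \<longrightarrow>
           rademacher xs (fclass n l p q \<mu> \<rho> H)
             \<le> \<mu> * N powr E * (sqrt (real_of_ereal (pstar p)) / m powr (1 / p))
               * K_hat n p \<rho> xs H)"
proof (intro conjI impI)
  have m: "m \<ge> 1" using assms(9) unfolding m_def by simp
  note rad = rademacher_fclass_le_K_hat[OF assms(2,4,5,1,3,6,7,8,9), folded N_def E_def m_def]
  {
    assume "p \<le> 2"
    let ?c = "real_of_ereal (min (pstar p) (ereal (8 * real n)))"
    show "rademacher xs (fclass n l p q \<mu> \<rho> H) \<le> \<mu> * N powr E * (sqrt ?c / sqrt m) * K_hat n p \<rho> xs H"
    proof (rule rad)
      fix B assume wB: "\<forall>i<length xs. enorm (pstar p) (nzstrings n) (\<lambda>z. \<bar>sample_coeff n \<rho> xs i z\<bar>) \<le> B"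
      have "sqrt m * sqrt m = m" using m by simp
      then have "2 ^ length xs * sqrt ?c * sqrt m * B = 2 ^ length xs * m * (sqrt ?c / sqrt m) * B"
        using m by (simp add: field_simps)
      with sum_signs_enorm_le_min[OF assms(2,9) pstar_ge_2[OF assms(4) \<open>p \<le> 2\<close>] wB]
      show "(\<Sum>e\<in>signs (length xs). enorm (pstar p) (nzstrings n)
          (\<lambda>z. \<bar>\<Sum>i<length xs. e ! i * sample_coeff n \<rho> xs i z\<bar>)) \<le> 2 ^ length xs * m * (sqrt ?c / sqrt m) * B"
        unfolding m_def by linarith
    qed
  next
    assume "2 < p"
    show "rademacher xs (fclass n l p q \<mu> \<rho> H)
        \<le> \<mu> * N powr E * (sqrt (real_of_ereal (pstar p)) / m powr (1 / p)) * K_hat n p \<rho> xs H"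
    proof (rule rad)
      fix B assume wB: "\<forall>i<length xs. enorm (pstar p) (nzstrings n) (\<lambda>z. \<bar>sample_coeff n \<rho> xs i z\<bar>) \<le> B"
        and "B \<ge> 0"
      have "m powr (1 - 1/p) = m * (1 / m powr (1/p))" using m by (simp add: powr_diff)
      also have "\<dots> \<le> m * (sqrt (real_of_ereal (pstar p)) / m powr (1/p))"
        using m pstar_ge_1[of p] \<open>2 < p\<close> by (intro mult_left_mono divide_right_mono) auto
      finally have "m powr (1 - 1/p) * B \<le> m * (sqrt (real_of_ereal (pstar p)) / m powr (1/p)) * B"
        using \<open>B \<ge> 0\<close> by (rule mult_right_mono)
      then have "2 ^ length xs * m powr (1 - 1/p) * B
          \<le> 2 ^ length xs * m * (sqrt (real_of_ereal (pstar p)) / m powr (1/p)) * B"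
        unfolding mult.assoc by (rule mult_left_mono) simp
      with sum_signs_enorm_le_gt_2[OF finite_nzstrings \<open>2 < p\<close> assms(9) wB]
      show "(\<Sum>e\<in>signs (length xs). enorm (pstar p) (nzstrings n)
          (\<lambda>z. \<bar>\<Sum>i<length xs. e ! i * sample_coeff n \<rho> xs i z\<bar>))
          \<le> 2 ^ length xs * m * (sqrt (real_of_ereal (pstar p)) / m powr (1 / p)) * B"
        unfolding m_def by linarith
    qed
  }
qed

end
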